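(* Let $M\in\mathbb Z$, $s\in\{0,\dots,NL-1\}$ with $M\equiv s\pmod{NL}$, $0\le d\le l$, $n=s+lNL$, and let $m\in\mathbb Z$ be defined by $M-s-lNL=-mNL$ (so $\underline{o_{n+1}}=\cdots=\underline{o_{n+NL}}=m$). Let $1\le b\le L$ and $1\le c\le N$. Define subspaces of $\mathbb K[z_1^{\pm1},\dots,z_{n+bc}^{\pm1}]\otimes(\mathbb K^L)^{\otimes(n+bc)}$: $\mathcal K=\mathrm{span}\{z_1^{m'_1}\cdots z_{n+bc}^{m'_{n+bc}}\otimes\mathfrak e:\ \mathfrak e\in(\mathbb K^L)^{\otimes(n+bc)},\ m'_i\le m\ \forall i,\ \#\{i: m'_i=m\}<bc\}$, $\mathcal L=\mathrm{span}\{z_1^{m'_1}\cdots z_{n+bc}^{m'_{n+bc}}\otimes\mathfrak e_{b_1}\otimes\cdots\otimes\mathfrak e_{b_{n+bc}}:\ m'_1,\dots,m'_n<m,\ m'_{n+1}=\cdots=m'_{n+bc}=m,\ \exists j<b\text{ with }\#\{1\le i\le bc: b_{n+i}=j\}>c\}$. Let $y=y^{(n)}\otimes\mathfrak v_{\epsilon_1}\otimes\cdots\otimes\mathfrak v_{\epsilon_{bc}}\in(\mathbb K^N)^{\otimes n}\otimes(\mathbb K^N)^{\otimes bc}$ with $N-c+1\le\epsilon_i\le N$ for all $i$. Then for $f_1\in\mathcal K$ and $f_2\in\mathcal L$: (i) $\wedge(f_1\otimes y)\in\bigoplus_{d'>l}V^{d'}_{M,n+bc}$; (ii) $\wedge(f_2\otimes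 y)=0$.
   Context: Let $N,L\ge 1$ be integers, $q$ an indeterminate and $\mathbb K=\mathbb Q(q^{1/(2N)})$. Let $\mathbb K^L$ have basis $\mathfrak e_1,\dots,\mathfrak e_L$, $\mathbb K^N$ have basis $\mathfrak v_1,\dots,\mathfrak v_N$, and $V_{\mathrm{aff}}=\mathbb K[z^{\pm1}]\otimes\mathbb K^L\otimes\mathbb K^N$. Identify $V_{\mathrm{aff}}^{\otimes r}=\mathbb K[z_1^{\pm1},\dots,z_r^{\pm1}]\otimes(\mathbb K^L)^{\otimes r}\otimes(\mathbb K^N)^{\otimes r}$ (the $z$ of the $i$th factor becomes $z_i$). With $E_{a,b}$ the matrix units of $\mathbb K^L$ put $R(z_1,z_2)=(q^2z_1-z_2)\sum_{a}E_{a,a}\otimes E_{a,a}+q(z_1-z_2)\sum_{a\neq b}E_{a,a}\otimes E_{b,b}+z_1(q^2-1)\sum_{a<b}E_{a,b}\otimes E_{b,a}+z_2(q^2-1)\sum_{a>b}E_{a,b}\otimes E_{b,a}$, $s$ the exchange of the two factors of $(\mathbb K[z^{\pm1}]\otimes\mathbb K^L)^{\otimes 2}$, $\overset{c}{T}=\frac{z_1-q^2z_2}{z_1-z_2}\bigl(1-s\cdot\frac{R(z_1,z_2)}{q^2z_1-z_2}\bigr)-1$, and $\overset{s}{T}$ on $(\mathbb K^N)^{\otimes 2}$: $\mathfrak v_{\epsilon_1}\otimes\mathfrak v_{\epsilon_2}\mapsto q^2\mathfrak v_{\epsilon_1}\otimes\mathfrak v_{\epsilon_2}$ if $\epsilon_1=\epsilon_2$,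 $q\,\mathfrak v_{\epsilon_2}\otimes\mathfrak v_{\epsilon_1}$ if $\epsilon_1<\epsilon_2$, $q\,\mathfrak v_{\epsilon_2}\otimes\mathfrak v_{\epsilon_1}+(q^2-1)\mathfrak v_{\epsilon_1}\otimes\mathfrak v_{\epsilon_2}$ if $\epsilon_1>\epsilon_2$; $\overset{c}{T}_i,\overset{s}{T}_i$ act in factors $i,i+1$. $\wedge^rV_{\mathrm{aff}}=V_{\mathrm{aff}}^{\otimes r}/\sum_{i}\mathrm{Im}(\overset{c}{T}_i-\overset{s}{T}_i)$ with quotient map $\wedge$. Write $k=\bar k-N(\dot k+L\underline k)$ ($\bar k\in\{1..N\}$, $\dot k\in\{1..L\}$, $\underline k\in\mathbb Z$), $u_k=z^{\underline k}\mathfrak e_{\dot k}\mathfrak v_{\bar k}$; $u_{k_1}\wedge\cdots\wedge u_{k_r}$ is the image of $u_{k_1}\otimes\cdots\otimes u_{k_r}$, normally ordered if $k_1>\cdots>k_r$ (these form a basis of $\wedge^rV_{\mathrm{aff}}$). Gradings: let $o_i=M-i+1$ ($i\ge1$). For $r\ge0$, $V_{M,r}\subset\wedge^rV_{\mathrm{aff}}$ is the span of the normally ordered $u_{k_1}\wedge\cdots\wedge u_{k_r}$ with $\underline{k_r}\le\underline{o_r}$, graded by $\deg=\sum_{i=1}^r(\underline{o_i}-\underline{k_i})$; $V^d_{M,r}$ is its degree-$d$ component. *)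

theory Defs
  imports "HOL-Computational_Algebra.Polynomial" "HOL-Computational_Algebra.Fraction_Field"
          "HOL-Library.Function_Algebras"
begin

section \<open>The ground field K = Q(t), t = q^(1/(2N)), q = t^(2N)\<close>

type_synonym K = "rat poly fract"

definition tq :: K where "tq = Fract [:0, 1:] 1"

definition qK :: "nat \<Rightarrow> K" where "qK N = tq ^ (2 * N)"

text \<open>A basis word of V_aff^{(x)r} is a list of r triples (exponent, L-index, N-index),
  standing for z_1^{m_1}...z_r^{m_r} (x) e_{b_1}(x)...(x)e_{b_r} (x) v_{e_1}(x)...(x)v_{e_r}.\<close>

type_synonym word = "(int \<times> nat \<times> nat) list"
type_synonym tens = "word \<Rightarrow> K"

definition delta :: "'a \<Rightarrow> 'a \<Rightarrow> K" where
  "delta w = (\<lambda>v. if v = w then 1 else 0)"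

definition sc :: "K \<Rightarrow> ('a \<Rightarrow> K) \<Rightarrow> ('a \<Rightarrow> K)" where
  "sc c f = (\<lambda>v. c * f v)"

definition fspan :: "('a \<Rightarrow> K) set \<Rightarrow> ('a \<Rightarrow> K) set" where
  "fspan S = {f. \<exists>A c. finite A \<and> A \<subseteq> S \<and> f = (\<Sum>g\<in>A. sc (c g) g)}"

text \<open>Linear extension of a map given on basis words (for finitely supported f).\<close>
definition lin_ext :: "(word \<Rightarrow> tens) \<Rightarrow> tens \<Rightarrow> tens" where
  "lin_ext g f = (\<lambda>v. \<Sum>w\<in>{w. f w \<noteq> 0}. f w * g w v)"

definition valid_word :: "nat \<Rightarrow> nat \<Rightarrow> nat \<Rightarrow> word \<Rightarrow> bool" where
  "valid_word N L r w \<longleftrightarrow> length w = r \<and>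
     (\<forall>(m, b, e)\<in>set w. 1 \<le> b \<and> b \<le> L \<and> 1 \<le> e \<and> e \<le> N)"

definition tens_space :: "nat \<Rightarrow> nat \<Rightarrow> nat \<Rightarrow> tens set" where
  "tens_space N L r = {f. finite {w. f w \<noteq> 0} \<and> (\<forall>w. f w \<noteq> 0 \<longrightarrow> valid_word N L r w)}"

section \<open>Operators acting in (0-based) list positions p, p+1\<close>

definition zsh :: "nat \<Rightarrow> word \<Rightarrow> word" where
  "zsh p w = (case w ! p of (m, b, e) \<Rightarrow> w[p := (m + 1, b, e)])"

definition Zop :: "nat \<Rightarrow> tens \<Rightarrow> tens" where
  "Zop p = lin_ext (\<lambda>w. delta (zsh p w))"

text \<open>exchange s of the two factors of (K[z] (x) K^L)^(x)2 (the K^N parts stay)\<close>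
definition swapc :: "nat \<Rightarrow> word \<Rightarrow> word" where
  "swapc p w = (case w ! p of (m1, b1, e1) \<Rightarrow> case w ! Suc p of (m2, b2, e2) \<Rightarrow>
      w[p := (m2, b2, e1), Suc p := (m1, b1, e2)])"

definition Sop :: "nat \<Rightarrow> tens \<Rightarrow> tens" where
  "Sop p = lin_ext (\<lambda>w. delta (swapc p w))"

definition swapL :: "nat \<Rightarrow> word \<Rightarrow> word" where
  "swapL p w = (case w ! p of (m1, b1, e1) \<Rightarrow> case w ! Suc p of (m2, b2, e2) \<Rightarrow>
      w[p := (m1, b2, e1), Suc p := (m2, b1, e2)])"

definition swapN :: "nat \<Rightarrow> word \<Rightarrow> word" where
  "swapN p w = (case w ! p of (m1, b1, e1) \<Rightarrow> case w ! Suc p of (m2, b2, e2) \<Rightarrow>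
      w[p := (m1, b1, e2), Suc p := (m2, b2, e1)])"

definition Rop :: "nat \<Rightarrow> nat \<Rightarrow> tens \<Rightarrow> tens" where
  "Rop N p = lin_ext (\<lambda>w. (let b1 = fst (snd (w ! p)); b2 = fst (snd (w ! Suc p)); q = qK N in
     if b1 = b2 then sc (q^2) (delta (zsh p w)) - delta (zsh (Suc p) w)
     else sc q (delta (zsh p w) - delta (zsh (Suc p) w))
          + sc (q^2 - 1) (delta (zsh (if b1 > b2 then p else Suc p) (swapL p w)))))"

text \<open>y = T^c_(p+1) x.  Since T^c + 1 = ((z_1 - q^2 z_2) x + s(R x)) / (z_1 - z_2),
  this is characterised by (z_1 - z_2)(y + x) = (z_1 - q^2 z_2) x + s(R x).\<close>
definition is_Tc :: "nat \<Rightarrow> nat \<Rightarrow> tens \<Rightarrow> tens \<Rightarrow> bool" where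
  "is_Tc N p x y \<longleftrightarrow>
     Zop p (y + x) - Zop (Suc p) (y + x) = Zop p x - sc ((qK N)^2) (Zop (Suc p) x) + Sop p (Rop N p x)"

definition Tsop :: "nat \<Rightarrow> nat \<Rightarrow> tens \<Rightarrow> tens" where
  "Tsop N p = lin_ext (\<lambda>w. (let e1 = snd (snd (w ! p)); e2 = snd (snd (w ! Suc p)); q = qK N in
     if e1 = e2 then sc (q^2) (delta w)
     else if e1 < e2 then sc q (delta (swapN p w))
     else sc q (delta (swapN p w)) + sc (q^2 - 1) (delta w)))"

text \<open>The subspace sum_i Im(T^c_i - T^s_i) of V_aff^{(x)r}; wedge(x) = wedge(x') iff x - x' lies in it.\<close>
definition rel_space :: "nat \<Rightarrow> nat \<Rightarrow> nat \<Rightarrow> tens set" where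
  "rel_space N L r = fspan {y - Tsop N p x | p x y. Suc p < r \<and>
       x \<in> tens_space N L r \<and> y \<in> tens_space N L r \<and> is_Tc N p x y}"

text \<open>The word entry (m,b,e) is u_k with k = e - N(b + L m), underline k = m, dot k = b, bar k = e.\<close>
definition kidx :: "nat \<Rightarrow> nat \<Rightarrow> int \<times> nat \<times> nat \<Rightarrow> int" where
  "kidx N L x = (case x of (m, b, e) \<Rightarrow> int e - int N * (int b + int L * m))"

definition kbar :: "nat \<Rightarrow> int \<Rightarrow> int" where
  "kbar N k = (k - 1) mod int N + 1"

definition kdot :: "nat \<Rightarrow> nat \<Rightarrow> int \<Rightarrow> int" where
  "kdot N L k = ((kbar N k - k) div int N - 1) mod int L + 1"

definition kunder :: "nat \<Rightarrow> nat \<Rightarrow> int \<Rightarrow> int" where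
  "kunder N L k = ((kbar N k - k) div int N - kdot N L k) div int L"

definition oo :: "int \<Rightarrow> nat \<Rightarrow> int" where
  "oo M i = M - int i + 1"

definition deg_word :: "nat \<Rightarrow> nat \<Rightarrow> int \<Rightarrow> word \<Rightarrow> int" where
  "deg_word N L M w = (\<Sum>i<length w. kunder N L (oo M (Suc i)) - fst (w ! i))"

text \<open>normally ordered words u_{k_1} (x) ... (x) u_{k_r} with k_1 > ... > k_r and
  underline k_r <= underline o_r (i.e. basis elements of V_{M,r})\<close>
definition VMr_word :: "nat \<Rightarrow> nat \<Rightarrow> int \<Rightarrow> nat \<Rightarrow> word \<Rightarrow> bool" where
  "VMr_word N L M r w \<longleftrightarrow> valid_word N L r w \<and>
     (\<forall>i j. i < j \<and> j < r \<longrightarrow> kidx N L (w ! i) > kidx N L (w ! j)) \<and>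
     (0 < r \<longrightarrow> fst (w ! (r - 1)) \<le> kunder N L (oo M r))"

definition wedge_in_high_deg :: "nat \<Rightarrow> nat \<Rightarrow> int \<Rightarrow> nat \<Rightarrow> nat \<Rightarrow> tens \<Rightarrow> bool" where
  "wedge_in_high_deg N L M r l x \<longleftrightarrow>
     (\<exists>g \<in> fspan {delta w | w. VMr_word N L M r w \<and> int l < deg_word N L M w}.
        x - g \<in> rel_space N L r)"

text \<open>Elements of K[z_1^{+-1},...,z_r^{+-1}] (x) (K^L)^{(x)r}: functions on lists of
  (exponent, L-index); elements of (K^N)^{(x)r}: functions on lists of N-indices.\<close>

definition Ltens :: "nat \<Rightarrow> nat \<Rightarrow> (nat list \<Rightarrow> K) set" where
  "Ltens L r = {E. \<forall>bs. E bs \<noteq> 0 \<longrightarrow> length bs = r \<and> (\<forall>x\<in>set bs. 1 \<le> x \<and> x \<le> L)}"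

definition Ntens :: "nat \<Rightarrow> nat \<Rightarrow> (nat list \<Rightarrow> K) set" where
  "Ntens N r = {E. \<forall>es. E es \<noteq> 0 \<longrightarrow> length es = r \<and> (\<forall>x\<in>set es. 1 \<le> x \<and> x \<le> N)}"

definition calK :: "nat \<Rightarrow> nat \<Rightarrow> int \<Rightarrow> nat \<Rightarrow> nat \<Rightarrow> ((int \<times> nat) list \<Rightarrow> K) set" where
  "calK L n m b c = fspan {(\<lambda>u. if map fst u = ms then E (map snd u) else 0) | ms E.
      length ms = n + b * c \<and> E \<in> Ltens L (n + b * c) \<and> (\<forall>x\<in>set ms. x \<le> m) \<and>
      card {i. i < n + b * c \<and> ms ! i = m} < b * c}"

definition calL :: "nat \<Rightarrow> nat \<Rightarrow> int \<Rightarrow> nat \<Rightarrow> nat \<Rightarrow> ((int \<times> nat) list \<Rightarrow> K) set" where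
  "calL L n m b c = fspan {delta u | u. length u = n + b * c \<and>
      (\<forall>x\<in>set u. 1 \<le> snd x \<and> snd x \<le> L) \<and>
      (\<forall>i < n. fst (u ! i) < m) \<and> (\<forall>i. n \<le> i \<and> i < n + b * c \<longrightarrow> fst (u ! i) = m) \<and>
      (\<exists>j < b. c < card {i. 1 \<le> i \<and> i \<le> b * c \<and> snd (u ! (n + i - 1)) = j})}"

definition tprod :: "((int \<times> nat) list \<Rightarrow> K) \<Rightarrow> (nat list \<Rightarrow> K) \<Rightarrow> tens" where
  "tprod f y = (\<lambda>w. f (map (\<lambda>(m, b, e). (m, b)) w) * y (map (\<lambda>(m, b, e). e) w))"

definition ytens :: "nat \<Rightarrow> (nat list \<Rightarrow> K) \<Rightarrow> nat list \<Rightarrow> (nat list \<Rightarrow> K)" where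
  "ytens n yn eps = (\<lambda>es. if length es = n + length eps \<and> drop n es = eps then yn (take n es) else 0)"

end

theory Submission
  imports Defs "HOL-Combinatorics.Transposition"
begin

text \<open>
  Modulo the relations, T^c and T^s agree on every pair of adjacent tensor factors. Computing T^c
  on basis words explicitly (a division by z_p - z_(p+1)) turns this into local straightening
  rules: an adjacent pair that is not normally ordered is rewritten into pairs whose exponents lie
  strictly between the old ones, or into pairs with permuted indices, and a pair of equal entries
  gives 0. Each rule decreases a well-founded measure, so every basis word is congruent to a
  combination of normally ordered words. The rules never create exponents above the largest one
  nor new entries with the largest exponent m; hence the words of f_1 (x) y straighten to
  normally ordered words with fewer than bc exponents equal to m, and for those the first n + 1
  positions alone contribute more than l to the degree. In the words of f_2 (x) y the last bc
  positions all carry the exponent m and one of the top c indices of K^N, and more than c of them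
  carry the same index j of K^L. Straightening inside this block preserves these properties, but a
  normally ordered block can contain at most c entries with K^L-index j (their K^N-indices must be
  distinct), so f_2 (x) y straightens to 0.\<close>

definition supp :: "('a \<Rightarrow> K) \<Rightarrow> 'a set" where
  "supp f = {w. f w \<noteq> 0}"

lemma sum_fun_apply: "(sum F A) x = (\<Sum>a\<in>A. F a x)"
  by (induction A rule: infinite_finite_induct) auto

lemma sc_apply [simp]: "sc k f v = k * f v"
  by (simp add: sc_def)

lemma uminus_sc: "- sc k f = sc (- k) f"
  by (simp add: fun_eq_iff)

lemma supp_delta [simp]: "supp (delta w) = {w}"
  by (auto simp: supp_def delta_def)

lemma sum_delta_expansion:
  assumes "finite B" "supp f \<subseteq> B"
  shows "f = (\<Sum>v\<in>B. sc (f v) (delta v))"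
proof
  fix u
  have "(\<Sum>v\<in>B. sc (f v) (delta v)) u = (\<Sum>v\<in>B. if v = u then f v else 0)"
    unfolding sum_fun_apply by (rule sum.cong) (auto simp: delta_def)
  also have "\<dots> = f u"
    using assms by (auto simp: supp_def)
  finally show "f u = (\<Sum>v\<in>B. sc (f v) (delta v)) u" by simp
qed

lemma fspan_base: "g \<in> S \<Longrightarrow> g \<in> fspan S"
  unfolding fspan_def by (intro CollectI exI[of _ "{g}"] exI[of _ "\<lambda>_. 1"]) (auto simp: sc_def)

lemma fspan_mono: "S \<subseteq> T \<Longrightarrow> fspan S \<subseteq> fspan T"
  unfolding fspan_def by blast

lemma fspan_empty [simp]: "fspan {} = {0}"
  unfolding fspan_def by auto

lemma fspan_extend:
  assumes "finite A" "A \<subseteq> B" "finite B"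
  shows "(\<Sum>h\<in>A. sc (c h) h) = (\<Sum>h\<in>B. sc (if h \<in> A then c h else 0) h)"
  by (rule sum.mono_neutral_cong_left) (use assms in \<open>auto simp: sc_def fun_eq_iff\<close>)

lemma fspan_add:
  assumes "f \<in> fspan S" "g \<in> fspan S"
  shows "f + g \<in> fspan S"
proof -
  obtain A c where A: "finite A" "A \<subseteq> S" "f = (\<Sum>h\<in>A. sc (c h) h)"
    using assms(1) unfolding fspan_def by blast
  obtain B d where B: "finite B" "B \<subseteq> S" "g = (\<Sum>h\<in>B. sc (d h) h)"
    using assms(2) unfolding fspan_def by blast
  let ?c = "\<lambda>h. if h \<in> A then c h else 0" and ?d = "\<lambda>h. if h \<in> B then d h else 0"
  have f: "f = (\<Sum>h\<in>A \<union> B. sc (?c h) h)"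
    unfolding A(3) by (rule fspan_extend) (use A(1) B(1) in auto)
  have g: "g = (\<Sum>h\<in>A \<union> B. sc (?d h) h)"
    unfolding B(3) by (rule fspan_extend) (use A(1) B(1) in auto)
  have "f + g = (\<Sum>h\<in>A \<union> B. sc (?c h) h + sc (?d h) h)"
    unfolding f g by (rule sum.distrib[symmetric])
  also have "\<dots> = (\<Sum>h\<in>A \<union> B. sc (?c h + ?d h) h)"
    by (rule sum.cong) (simp_all add: sc_def fun_eq_iff distrib_right)
  finally show ?thesis
    unfolding fspan_def using A(1,2) B(1,2)
    by (intro CollectI exI[of _ "A \<union> B"] exI[of _ "\<lambda>h. ?c h + ?d h"]) auto
qed

lemma fspan_sc:
  assumes "f \<in> fspan S"
  shows "sc k f \<in> fspan S"
proof -
  obtain A c where A: "finite A" "A \<subseteq> S" "f = (\<Sum>h\<in>A. sc (c h) h)"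
    using assms unfolding fspan_def by blast
  have "sc k f = (\<Sum>h\<in>A. sc (k * c h) h)"
    unfolding A(3) by (simp add: fun_eq_iff sum_fun_apply sum_distrib_left mult.assoc)
  then show ?thesis
    unfolding fspan_def using A(1,2) by (intro CollectI exI[of _ A] exI[of _ "\<lambda>h. k * c h"]) auto
qed

lemma fspan_zero: "0 \<in> fspan S"
  using fspan_mono[of "{}" S] by auto

lemma fspan_nonzero:
  assumes "f \<in> fspan S" "f u \<noteq> 0"
  obtains g where "g \<in> S" "g u \<noteq> 0"
proof -
  obtain A c where A: "finite A" "A \<subseteq> S" "f = (\<Sum>h\<in>A. sc (c h) h)"
    using assms(1) unfolding fspan_def by blast
  have "(\<Sum>h\<in>A. c h * h u) \<noteq> 0"
    using assms(2) unfolding A(3) sum_fun_apply by simp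
  then obtain h where "h \<in> A" "h u \<noteq> 0"
    by (metis (mono_tags) mult_zero_right sum.neutral)
  then show ?thesis
    using A(2) that by blast
qed

lemma finite_supp_fspan:
  assumes "f \<in> fspan S" "\<And>g. g \<in> S \<Longrightarrow> finite (supp g)"
  shows "finite (supp f)"
proof -
  obtain A c where A: "finite A" "A \<subseteq> S" "f = (\<Sum>h\<in>A. sc (c h) h)"
    using assms(1) unfolding fspan_def by blast
  have "supp f \<subseteq> (\<Union>h\<in>A. supp h)"
  proof
    fix u assume "u \<in> supp f"
    then have "(\<Sum>h\<in>A. c h * h u) \<noteq> 0"
      unfolding A(3) supp_def sum_fun_apply by simp
    then obtain h where "h \<in> A" "c h * h u \<noteq> 0"
      by (rule sum.not_neutral_contains_not_neutral)
    then show "u \<in> (\<Union>h\<in>A. supp h)"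
      by (auto simp: supp_def)
  qed
  moreover have "finite (\<Union>h\<in>A. supp h)"
    using A(1,2) assms(2) by blast
  ultimately show ?thesis
    by (rule finite_subset)
qed

lemma lin_ext_finite:
  assumes "finite B" "supp f \<subseteq> B"
  shows "lin_ext g f v = (\<Sum>w\<in>B. f w * g w v)"
  unfolding lin_ext_def
  by (rule sum.mono_neutral_left) (use assms in \<open>auto simp: supp_def\<close>)

lemma lin_ext_delta [simp]: "lin_ext g (delta w) = g w"
  by (rule ext, subst lin_ext_finite[of "{w}"]) (auto simp: delta_def supp_def)

lemma lin_ext_delta_comp:
  assumes "finite (supp f)" "\<And>w. f w \<noteq> 0 \<Longrightarrow> \<phi> w = v \<longleftrightarrow> w = u"
  shows "lin_ext (\<lambda>w. delta (\<phi> w)) f v = f u"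
proof -
  have "lin_ext (\<lambda>w. delta (\<phi> w)) f v = (\<Sum>w\<in>supp f. if w = u then f w else 0)"
    unfolding lin_ext_finite[OF assms(1) order_refl]
  proof (rule sum.cong)
    fix w assume "w \<in> supp f"
    then have "\<phi> w = v \<longleftrightarrow> w = u"
      using assms(2) by (simp add: supp_def)
    then show "f w * delta (\<phi> w) v = (if w = u then f w else 0)"
      by (auto simp: delta_def)
  qed simp
  also have "\<dots> = f u"
    using assms(1) by (auto simp: supp_def)
  finally show ?thesis .
qed

text \<open>An entry (m, b, e) of a word stands for z^m e_b v_e; lidx and nidx in lemma names refer to b and e.\<close>
type_synonym entry = "int \<times> nat \<times> nat"

definition zdec :: "nat \<Rightarrow> word \<Rightarrow> word" where
  "zdec p w = (case w ! p of (m, b, e) \<Rightarrow> w[p := (m - 1, b, e)])"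

lemma zsh_zdec [simp]: "zsh p (zdec p v) = v" and zdec_zsh [simp]: "zdec p (zsh p v) = v"
  unfolding zsh_def zdec_def
  by (cases "p < length v"; auto split: prod.splits simp: list_update_beyond; metis list_update_id)+

lemma length_swapc [simp]: "length (swapc p w) = length w"
  by (auto simp: swapc_def split: prod.splits)

lemma swapc_swapc: "Suc p < length w \<Longrightarrow> swapc p (swapc p w) = w"
  unfolding swapc_def
  by (auto split: prod.splits simp: nth_list_update list_update_swap intro!: nth_equalityI)

lemma Zop_apply: "finite (supp f) \<Longrightarrow> Zop p f v = f (zdec p v)"
  unfolding Zop_def by (rule lin_ext_delta_comp) (auto dest: sym)

lemma Sop_apply:
  assumes "finite (supp f)" "\<And>w. f w \<noteq> 0 \<Longrightarrow> Suc p < length w"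
  shows "Sop p f v = f (swapc p v)"
  unfolding Sop_def by (rule lin_ext_delta_comp) (use assms swapc_swapc length_swapc in metis)+

definition set_pair :: "word \<Rightarrow> nat \<Rightarrow> entry \<Rightarrow> entry \<Rightarrow> word" where
  "set_pair w p X Y = w[p := X, Suc p := Y]"

definition pair_variant :: "word \<Rightarrow> nat \<Rightarrow> word \<Rightarrow> bool" where
  "pair_variant w p v \<longleftrightarrow> length v = length w \<and> (\<forall>j<length w. j \<noteq> p \<longrightarrow> j \<noteq> Suc p \<longrightarrow> v ! j = w ! j)"

lemma set_pair_set_pair [simp]: "set_pair (set_pair w p X Y) p X' Y' = set_pair w p X' Y'"
  by (simp add: set_pair_def list_update_swap[of "Suc p" p])

context
  fixes w :: word and p :: nat
  assumes pos: "Suc p < length w"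
begin

lemma set_pair_nth [simp]: "set_pair w p X Y ! p = X" "set_pair w p X Y ! Suc p = Y"
  using pos by (simp_all add: set_pair_def nth_list_update)

lemma length_set_pair [simp]: "length (set_pair w p X Y) = length w"
  by (simp add: set_pair_def)

lemma pair_variant_set_pair [simp]: "pair_variant w p (set_pair w p X Y)"
  by (simp add: pair_variant_def set_pair_def nth_list_update)

lemma pair_variant_self [simp]: "pair_variant w p w"
  by (simp add: pair_variant_def)

lemma pair_variant_eq: "pair_variant w p v \<Longrightarrow> v = set_pair w p (v ! p) (v ! Suc p)"
  unfolding pair_variant_def set_pair_def using pos
  by (intro nth_equalityI) (auto simp: nth_list_update)

lemma set_pair_self: "w ! p = A \<Longrightarrow> w ! Suc p = B \<Longrightarrow> w = set_pair w p A B"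
  using pair_variant_eq[OF pair_variant_self] by simp

lemma zdec_set_pair:
  "zdec p (set_pair w p (i, \<beta>, \<epsilon>) Y) = set_pair w p (i - 1, \<beta>, \<epsilon>) Y"
  "zdec (Suc p) (set_pair w p X (i, \<beta>, \<epsilon>)) = set_pair w p X (i - 1, \<beta>, \<epsilon>)"
  using pos by (simp_all add: zdec_def set_pair_def nth_list_update list_update_swap)

lemma zsh_set_pair:
  "zsh p (set_pair w p (i, \<beta>, \<epsilon>) Y) = set_pair w p (i + 1, \<beta>, \<epsilon>) Y"
  "zsh (Suc p) (set_pair w p X (i, \<beta>, \<epsilon>)) = set_pair w p X (i + 1, \<beta>, \<epsilon>)"
  using pos by (simp_all add: zsh_def set_pair_def nth_list_update list_update_swap)

lemma swap_set_pair:
  "swapc p (set_pair w p (i, \<beta>, \<epsilon>) (i', \<gamma>, \<eta>)) = set_pair w p (i', \<gamma>, \<epsilon>) (i, \<beta>, \<eta>)"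
  "swapL p (set_pair w p (i, \<beta>, \<epsilon>) (i', \<gamma>, \<eta>)) = set_pair w p (i, \<gamma>, \<epsilon>) (i', \<beta>, \<eta>)"
  "swapN p (set_pair w p (i, \<beta>, \<epsilon>) (i', \<gamma>, \<eta>)) = set_pair w p (i, \<beta>, \<eta>) (i', \<gamma>, \<epsilon>)"
  using pos by (simp_all add: swapc_def swapL_def swapN_def set_pair_def nth_list_update list_update_swap)

lemma pair_variant_zdec_swapc [simp]:
  "pair_variant w p (zdec p v) \<longleftrightarrow> pair_variant w p v"
  "pair_variant w p (zdec (Suc p) v) \<longleftrightarrow> pair_variant w p v"
  "pair_variant w p (swapc p v) \<longleftrightarrow> pair_variant w p v"
  unfolding pair_variant_def zdec_def swapc_def by (auto split: prod.splits simp: nth_list_update)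

lemma delta_set_pair:
  "delta (set_pair w p X Y) v = (if pair_variant w p v then of_bool ((v ! p, v ! Suc p) = (X, Y)) else 0)"
  using pair_variant_eq[of v] by (auto simp: delta_def)

end

section \<open>An explicit formula for T^c on basis words\<close>

text \<open>The coefficient computations below treat of_bool as an atom; case splitting on it blows up.\<close>
declare split_of_bool [split del]

definition interval_sign :: "int \<Rightarrow> int \<Rightarrow> int \<Rightarrow> K" where
  "interval_sign lo hi i = (if lo \<le> i \<and> i \<le> hi then 1 else if hi < i \<and> i < lo then -1 else 0)"

lemma interval_sign_diff:
  "interval_sign lo hi (i - 1) - interval_sign lo hi i = of_bool (i = hi + 1) - of_bool (i = lo)"
  unfolding interval_sign_def by auto

lemma interval_sign_empty [simp]: "interval_sign (a + 1) a i = 0" "interval_sign a (a - 1) i = 0"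
  unfolding interval_sign_def by auto

text \<open>
  The coefficient of z_1^i z_2^(a+c-i) e_\<beta> (x) e_\<gamma> in (T^c + 1)(z_1^a z_2^c e_\<beta> (x) e_\<gamma>).
  Dividing a difference of two monomials by z_1 - z_2 gives a geometric sum, which is
  where the signed interval indicators come from.\<close>
definition quot_coeff :: "K \<Rightarrow> nat \<Rightarrow> nat \<Rightarrow> int \<Rightarrow> int \<Rightarrow> int \<Rightarrow> K" where
  "quot_coeff q \<beta> \<gamma> a c i =
    (if \<beta> = \<gamma> then interval_sign (c + 1) a i - q\<^sup>2 * interval_sign c (a - 1) i
     else if \<gamma> < \<beta> then of_bool (i = a) + (1 - q\<^sup>2) * interval_sign c (a - 1) i
     else of_bool (i = a) + (1 - q\<^sup>2) * interval_sign (c + 1) (a - 1) i)"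

lemma quot_coeff_diff:
  "quot_coeff q \<beta> \<gamma> a c (i - 1) - quot_coeff q \<beta> \<gamma> a c i =
    (if \<beta> = \<gamma> then of_bool (i = a + 1) - of_bool (i = c + 1) - q\<^sup>2 * (of_bool (i = a) - of_bool (i = c))
     else if \<gamma> < \<beta> then of_bool (i = a + 1) - of_bool (i = a) + (1 - q\<^sup>2) * (of_bool (i = a) - of_bool (i = c))
     else of_bool (i = a + 1) - of_bool (i = a) + (1 - q\<^sup>2) * (of_bool (i = a) - of_bool (i = c + 1)))"
proof -
  have shift: "of_bool (i - 1 = a) = (of_bool (i = a + 1) :: K)"
    by (auto simp: of_bool_def)
  note d1 = interval_sign_diff[of "c + 1" a i] and d2 = interval_sign_diff[of c "a - 1" i]
    and d3 = interval_sign_diff[of "c + 1" "a - 1" i]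
  consider "\<beta> = \<gamma>" | "\<gamma> < \<beta>" | "\<beta> \<noteq> \<gamma>" "\<not> \<gamma> < \<beta>"
    by blast
  then show ?thesis
  proof cases
    case 1
    then have "quot_coeff q \<beta> \<gamma> a c (i - 1) - quot_coeff q \<beta> \<gamma> a c i =
        (interval_sign (c + 1) a (i - 1) - interval_sign (c + 1) a i)
        - q\<^sup>2 * (interval_sign c (a - 1) (i - 1) - interval_sign c (a - 1) i)"
      unfolding quot_coeff_def by (simp add: algebra_simps)
    then show ?thesis
      unfolding d1 d2 using 1 by simp
  next
    case 2
    then have "quot_coeff q \<beta> \<gamma> a c (i - 1) - quot_coeff q \<beta> \<gamma> a c i =
        (of_bool (i - 1 = a) - of_bool (i = a))
        + (1 - q\<^sup>2) * (interval_sign c (a - 1) (i - 1) - interval_sign c (a - 1) i)"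
      unfolding quot_coeff_def by (simp add: algebra_simps)
    then show ?thesis
      unfolding d2 shift using 2 by simp
  next
    case 3
    then have "quot_coeff q \<beta> \<gamma> a c (i - 1) - quot_coeff q \<beta> \<gamma> a c i =
        (of_bool (i - 1 = a) - of_bool (i = a))
        + (1 - q\<^sup>2) * (interval_sign (c + 1) (a - 1) (i - 1) - interval_sign (c + 1) (a - 1) i)"
      unfolding quot_coeff_def by (simp add: algebra_simps)
    then show ?thesis
      unfolding d3 shift using 3 by simp
  qed
qed

lemma quot_coeff_nonzero: "quot_coeff q \<beta> \<gamma> a c i \<noteq> 0 \<Longrightarrow> min a c \<le> i \<and> i \<le> max a c"
  unfolding quot_coeff_def interval_sign_def by (auto split: if_splits)

lemma quot_coeff_top: "c < a \<Longrightarrow> quot_coeff q \<beta> \<gamma> a c a = 1"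
  unfolding quot_coeff_def interval_sign_def by auto

text \<open>The coefficient of X \<otimes> Y in (T^c + 1)(A \<otimes> B); the K^N-parts of A, B stay in place.\<close>
fun Tc1_coeff :: "K \<Rightarrow> entry \<Rightarrow> entry \<Rightarrow> entry \<Rightarrow> entry \<Rightarrow> K" where
  "Tc1_coeff q (a, \<beta>, \<epsilon>) (c, \<gamma>, \<eta>) (i, \<beta>', \<epsilon>') (i', \<gamma>', \<eta>') =
    (if \<epsilon>' = \<epsilon> \<and> \<eta>' = \<eta> \<and> i + i' = a + c
     then of_bool (\<beta>' = \<beta> \<and> \<gamma>' = \<gamma>) * quot_coeff q \<beta> \<gamma> a c i
       - q * of_bool (\<beta>' = \<gamma> \<and> \<gamma>' = \<beta> \<and> \<beta> \<noteq> \<gamma> \<and> i = c)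
     else 0)"

fun R_coeff :: "K \<Rightarrow> entry \<Rightarrow> entry \<Rightarrow> entry \<Rightarrow> entry \<Rightarrow> K" where
  "R_coeff q (a, \<beta>, \<epsilon>) (c, \<gamma>, \<eta>) X Y =
    (if \<beta> = \<gamma>
     then q\<^sup>2 * of_bool ((X, Y) = ((a + 1, \<beta>, \<epsilon>), (c, \<gamma>, \<eta>))) - of_bool ((X, Y) = ((a, \<beta>, \<epsilon>), (c + 1, \<gamma>, \<eta>)))
     else q * (of_bool ((X, Y) = ((a + 1, \<beta>, \<epsilon>), (c, \<gamma>, \<eta>))) - of_bool ((X, Y) = ((a, \<beta>, \<epsilon>), (c + 1, \<gamma>, \<eta>))))
       + (q\<^sup>2 - 1) * of_bool ((X, Y) = (if \<gamma> < \<beta> then ((a + 1, \<gamma>, \<epsilon>), (c, \<beta>, \<eta>))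
                                                  else ((a, \<gamma>, \<epsilon>), (c + 1, \<beta>, \<eta>)))))"

lemma Tc1_coeff_eq_0:
  "\<not> (snd (snd X) = snd (snd A) \<and> snd (snd Y) = snd (snd B) \<and> fst X + fst Y = fst A + fst B)
    \<Longrightarrow> Tc1_coeff q A B X Y = 0"
  by (cases A; cases B; cases X; cases Y) auto

lemma R_coeff_eq_0:
  assumes "\<not> (snd (snd X) = snd (snd A) \<and> snd (snd Y) = snd (snd B) \<and> fst X + fst Y = fst A + fst B + 1)"
  shows "R_coeff q A B X Y = 0"
proof -
  obtain a \<beta> \<epsilon> c \<gamma> \<eta> where AB: "A = (a, \<beta>, \<epsilon>)" "B = (c, \<gamma>, \<eta>)"
    by (cases A, cases B) auto
  have "(X, Y) \<noteq> ((a + 1, \<delta>, \<epsilon>), (c, \<delta>', \<eta>))" "(X, Y) \<noteq> ((a, \<delta>, \<epsilon>), (c + 1, \<delta>', \<eta>))" for \<delta> \<delta>'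
    using assms by (auto simp: AB)
  then show ?thesis
    unfolding AB by (simp cong: conj_cong)
qed

lemma Tc1_coeff_division_unswapped:
  "Tc1_coeff q (a, \<beta>, \<epsilon>) (c, \<gamma>, \<eta>) (i - 1, \<beta>, \<epsilon>) (a + c + 1 - i, \<gamma>, \<eta>)
      - Tc1_coeff q (a, \<beta>, \<epsilon>) (c, \<gamma>, \<eta>) (i, \<beta>, \<epsilon>) (a + c + 1 - i - 1, \<gamma>, \<eta>) =
    of_bool ((i - 1, \<beta>, \<epsilon>) = (a, \<beta>, \<epsilon>) \<and> (a + c + 1 - i, \<gamma>, \<eta>) = (c, \<gamma>, \<eta>))
    - q\<^sup>2 * of_bool ((i, \<beta>, \<epsilon>) = (a, \<beta>, \<epsilon>) \<and> (a + c + 1 - i - 1, \<gamma>, \<eta>) = (c, \<gamma>, \<eta>))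
    + R_coeff q (a, \<beta>, \<epsilon>) (c, \<gamma>, \<eta>) (a + c + 1 - i, \<gamma>, \<epsilon>) (i, \<beta>, \<eta>)"
proof -
  have "R_coeff q (a, \<beta>, \<epsilon>) (c, \<gamma>, \<eta>) (a + c + 1 - i, \<gamma>, \<epsilon>) (i, \<beta>, \<eta>) =
      (if \<beta> = \<gamma> then q\<^sup>2 * of_bool (i = c) - of_bool (i = c + 1)
       else if \<gamma> < \<beta> then (q\<^sup>2 - 1) * of_bool (i = c) else (q\<^sup>2 - 1) * of_bool (i = c + 1))"
    by (auto simp: of_bool_def)
  moreover have "of_bool ((i - 1, \<beta>, \<epsilon>) = (a, \<beta>, \<epsilon>) \<and> (a + c + 1 - i, \<gamma>, \<eta>) = (c, \<gamma>, \<eta>)) = (of_bool (i = a + 1) :: K)"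
    "of_bool ((i, \<beta>, \<epsilon>) = (a, \<beta>, \<epsilon>) \<and> (a + c + 1 - i - 1, \<gamma>, \<eta>) = (c, \<gamma>, \<eta>)) = (of_bool (i = a) :: K)"
    by (auto simp: of_bool_def)
  moreover have "Tc1_coeff q (a, \<beta>, \<epsilon>) (c, \<gamma>, \<eta>) (i - 1, \<beta>, \<epsilon>) (a + c + 1 - i, \<gamma>, \<eta>)
      - Tc1_coeff q (a, \<beta>, \<epsilon>) (c, \<gamma>, \<eta>) (i, \<beta>, \<epsilon>) (a + c + 1 - i - 1, \<gamma>, \<eta>)
      = quot_coeff q \<beta> \<gamma> a c (i - 1) - quot_coeff q \<beta> \<gamma> a c i"
    by (simp cong: conj_cong)
  ultimately show ?thesis
    unfolding quot_coeff_diff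
    by (cases "\<beta> = \<gamma>"; cases "\<gamma> < \<beta>") (simp_all add: algebra_simps)
qed

text \<open>The coefficient form of (z_1 - z_2)(T^c + 1) x = (z_1 - q^2 z_2) x + s(R x).\<close>
lemma Tc1_coeff_division:
  "Tc1_coeff q A B (i - 1, \<beta>', \<epsilon>') (i', \<gamma>', \<eta>') - Tc1_coeff q A B (i, \<beta>', \<epsilon>') (i' - 1, \<gamma>', \<eta>') =
    of_bool ((i - 1, \<beta>', \<epsilon>') = A \<and> (i', \<gamma>', \<eta>') = B)
    - q\<^sup>2 * of_bool ((i, \<beta>', \<epsilon>') = A \<and> (i' - 1, \<gamma>', \<eta>') = B)
    + R_coeff q A B (i', \<gamma>', \<epsilon>') (i, \<beta>', \<eta>')"
proof -
  obtain a \<beta> \<epsilon> c \<gamma> \<eta> where AB: "A = (a, \<beta>, \<epsilon>)" "B = (c, \<gamma>, \<eta>)"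
    by (cases A, cases B) auto
  show ?thesis
  proof (cases "\<epsilon>' = \<epsilon> \<and> \<eta>' = \<eta> \<and> i' = a + c + 1 - i")
    case False
    have z1: "Tc1_coeff q A B (i - 1, \<beta>', \<epsilon>') (i', \<gamma>', \<eta>') = 0"
      by (rule Tc1_coeff_eq_0) (use False in \<open>auto simp: AB\<close>)
    have z2: "Tc1_coeff q A B (i, \<beta>', \<epsilon>') (i' - 1, \<gamma>', \<eta>') = 0"
      by (rule Tc1_coeff_eq_0) (use False in \<open>auto simp: AB\<close>)
    have z3: "R_coeff q A B (i', \<gamma>', \<epsilon>') (i, \<beta>', \<eta>') = 0"
      by (rule R_coeff_eq_0) (use False in \<open>auto simp: AB\<close>)
    have z4: "of_bool ((i - 1, \<beta>', \<epsilon>') = A \<and> (i', \<gamma>', \<eta>') = B) = (0 :: K)"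
      using False by (auto simp: AB)
    have z5: "of_bool ((i, \<beta>', \<epsilon>') = A \<and> (i' - 1, \<gamma>', \<eta>') = B) = (0 :: K)"
      using False by (auto simp: AB)
    show ?thesis
      unfolding z1 z2 z3 z4 z5 by simp
  next
    case True
    then have e: "\<epsilon>' = \<epsilon>" "\<eta>' = \<eta>" "i' = a + c + 1 - i"
      by auto
    consider "\<beta>' = \<beta>" "\<gamma>' = \<gamma>" | "\<beta>' = \<gamma>" "\<gamma>' = \<beta>" "\<beta> \<noteq> \<gamma>"
      | "\<not> (\<beta>' = \<beta> \<and> \<gamma>' = \<gamma>)" "\<not> (\<beta>' = \<gamma> \<and> \<gamma>' = \<beta>)"
      by blast
    then show ?thesis
    proof cases
      case 1
      then show ?thesis
        unfolding AB e using Tc1_coeff_division_unswapped by simp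
    next
      case 2
      have "Tc1_coeff q A B (i - 1, \<beta>', \<epsilon>') (i', \<gamma>', \<eta>') - Tc1_coeff q A B (i, \<beta>', \<epsilon>') (i' - 1, \<gamma>', \<eta>')
          = q * of_bool (i = c) - q * of_bool (i = c + 1)"
        using 2 unfolding AB e by (auto simp: of_bool_def)
      moreover have "R_coeff q A B (i', \<gamma>', \<epsilon>') (i, \<beta>', \<eta>') = q * of_bool (i = c) - q * of_bool (i = c + 1)"
        using 2 unfolding AB e by (auto simp: of_bool_def)
      ultimately show ?thesis
        using 2 unfolding AB by simp
    next
      case 3
      then have "\<not> (\<gamma>' = \<beta> \<and> \<beta>' = \<gamma>)" "\<not> (\<gamma>' = \<gamma> \<and> \<beta>' = \<beta>)"
        by auto
      with 3 show ?thesis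
        unfolding AB e by (simp cong: conj_cong)
    qed
  qed
qed

definition Tc1_basis :: "nat \<Rightarrow> nat \<Rightarrow> word \<Rightarrow> tens" where
  "Tc1_basis N p w =
    (\<lambda>v. if pair_variant w p v then Tc1_coeff (qK N) (w ! p) (w ! Suc p) (v ! p) (v ! Suc p) else 0)"

definition Tc_basis :: "nat \<Rightarrow> nat \<Rightarrow> word \<Rightarrow> tens" where
  "Tc_basis N p w = Tc1_basis N p w - delta w"

definition pair_perm :: "'a \<Rightarrow> 'a \<Rightarrow> 'a \<Rightarrow> 'a \<Rightarrow> bool" where
  "pair_perm x y x' y' \<longleftrightarrow> (x' = x \<and> y' = y) \<or> (x' = y \<and> y' = x)"

context
  fixes w :: word and p :: nat and a c :: int and \<beta> \<gamma> \<epsilon> \<eta> :: nat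
  assumes pos: "Suc p < length w" and A: "w ! p = (a, \<beta>, \<epsilon>)" and B: "w ! Suc p = (c, \<gamma>, \<eta>)"
begin

lemma word_eq_set_pair: "w = set_pair w p (a, \<beta>, \<epsilon>) (c, \<gamma>, \<eta>)"
  by (rule set_pair_self[OF pos A B])

lemma Rop_delta_apply:
  "Rop N p (delta w) v = (if pair_variant w p v then R_coeff (qK N) (a, \<beta>, \<epsilon>) (c, \<gamma>, \<eta>) (v ! p) (v ! Suc p) else 0)"
proof -
  note W = word_eq_set_pair
  have "zsh p w = set_pair w p (a + 1, \<beta>, \<epsilon>) (c, \<gamma>, \<eta>)" "zsh (Suc p) w = set_pair w p (a, \<beta>, \<epsilon>) (c + 1, \<gamma>, \<eta>)"
    "zsh p (swapL p w) = set_pair w p (a + 1, \<gamma>, \<epsilon>) (c, \<beta>, \<eta>)"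
    "zsh (Suc p) (swapL p w) = set_pair w p (a, \<gamma>, \<epsilon>) (c + 1, \<beta>, \<eta>)"
    by (subst (1 2) W, simp add: zsh_set_pair[OF pos] swap_set_pair[OF pos])+
  then have R: "Rop N p (delta w) = (if \<beta> = \<gamma>
      then sc ((qK N)\<^sup>2) (delta (set_pair w p (a + 1, \<beta>, \<epsilon>) (c, \<gamma>, \<eta>)))
        - delta (set_pair w p (a, \<beta>, \<epsilon>) (c + 1, \<gamma>, \<eta>))
      else sc (qK N) (delta (set_pair w p (a + 1, \<beta>, \<epsilon>) (c, \<gamma>, \<eta>)) - delta (set_pair w p (a, \<beta>, \<epsilon>) (c + 1, \<gamma>, \<eta>)))
        + sc ((qK N)\<^sup>2 - 1) (delta (if \<gamma> < \<beta> then set_pair w p (a + 1, \<gamma>, \<epsilon>) (c, \<beta>, \<eta>)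
                                     else set_pair w p (a, \<gamma>, \<epsilon>) (c + 1, \<beta>, \<eta>))))"
    unfolding Rop_def lin_ext_delta using A B by (simp add: Let_def)
  show ?thesis
    unfolding R by (cases "\<beta> = \<gamma>"; cases "\<gamma> < \<beta>") (simp_all add: delta_set_pair[OF pos])
qed

lemma Tc1_basis_nonzero:
  assumes "Tc1_basis N p w v \<noteq> 0"
  obtains i where "v = set_pair w p (i, \<beta>, \<epsilon>) (a + c - i, \<gamma>, \<eta>)" "quot_coeff (qK N) \<beta> \<gamma> a c i \<noteq> 0"
  | "v = set_pair w p (c, \<gamma>, \<epsilon>) (a, \<beta>, \<eta>)" "\<beta> \<noteq> \<gamma>"
proof -
  have var: "pair_variant w p v"
    using assms by (auto simp: Tc1_basis_def split: if_splits)
  obtain i \<beta>' \<epsilon>' i' \<gamma>' \<eta>' where X: "v ! p = (i, \<beta>', \<epsilon>')" and Y: "v ! Suc p = (i', \<gamma>', \<eta>')"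
    by (cases "v ! p", cases "v ! Suc p") auto
  have V: "v = set_pair w p (i, \<beta>', \<epsilon>') (i', \<gamma>', \<eta>')"
    using pair_variant_eq[OF pos var] X Y by simp
  have nz: "Tc1_coeff (qK N) (a, \<beta>, \<epsilon>) (c, \<gamma>, \<eta>) (i, \<beta>', \<epsilon>') (i', \<gamma>', \<eta>') \<noteq> 0"
    using assms var X Y A B by (simp add: Tc1_basis_def)
  then have "\<epsilon>' = \<epsilon>" "\<eta>' = \<eta>" "i' = a + c - i"
    by (auto split: if_splits)
  moreover have "(\<beta>' = \<beta> \<and> \<gamma>' = \<gamma> \<and> quot_coeff (qK N) \<beta> \<gamma> a c i \<noteq> 0) \<or> (\<beta>' = \<gamma> \<and> \<gamma>' = \<beta> \<and> \<beta> \<noteq> \<gamma> \<and> i = c)"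
    using nz by (auto simp: of_bool_def split: if_splits)
  ultimately show ?thesis
    using that V by auto
qed

lemma supp_Tc1_basis:
  "supp (Tc1_basis N p w) \<subseteq>
    (\<lambda>i. set_pair w p (i, \<beta>, \<epsilon>) (a + c - i, \<gamma>, \<eta>)) ` {min a c..max a c} \<union> {set_pair w p (c, \<gamma>, \<epsilon>) (a, \<beta>, \<eta>)}"
proof
  fix v assume "v \<in> supp (Tc1_basis N p w)"
  then have "Tc1_basis N p w v \<noteq> 0"
    by (simp add: supp_def)
  then show "v \<in> (\<lambda>i. set_pair w p (i, \<beta>, \<epsilon>) (a + c - i, \<gamma>, \<eta>)) ` {min a c..max a c} \<union> {set_pair w p (c, \<gamma>, \<epsilon>) (a, \<beta>, \<eta>)}"
    by (elim Tc1_basis_nonzero) (auto dest: quot_coeff_nonzero)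
qed

lemma finite_supp_Tc1_basis: "finite (supp (Tc1_basis N p w))"
  by (rule finite_subset[OF supp_Tc1_basis]) auto

lemma supp_Tc_basis:
  assumes "c < a"
  shows "supp (Tc_basis N p w) \<subseteq>
    {set_pair w p (i, \<beta>', \<epsilon>) (a + c - i, \<gamma>', \<eta>) | i \<beta>' \<gamma>'. c \<le> i \<and> i < a \<and> pair_perm \<beta> \<gamma> \<beta>' \<gamma>'}"
proof
  fix v assume "v \<in> supp (Tc_basis N p w)"
  then have nz: "Tc1_basis N p w v - delta w v \<noteq> 0"
    by (simp add: supp_def Tc_basis_def)
  have "Tc1_basis N p w w = 1"
    using A B quot_coeff_top[OF assms] pair_variant_self[OF pos] by (simp add: Tc1_basis_def)
  then have "v \<noteq> w" and "Tc1_basis N p w v \<noteq> 0"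
    using nz by (auto simp: delta_def split: if_splits)
  then show "v \<in> {set_pair w p (i, \<beta>', \<epsilon>) (a + c - i, \<gamma>', \<eta>) | i \<beta>' \<gamma>'. c \<le> i \<and> i < a \<and> pair_perm \<beta> \<gamma> \<beta>' \<gamma>'}"
  proof (elim Tc1_basis_nonzero)
    fix i assume v: "v = set_pair w p (i, \<beta>, \<epsilon>) (a + c - i, \<gamma>, \<eta>)" and "quot_coeff (qK N) \<beta> \<gamma> a c i \<noteq> 0"
    then have "c \<le> i" "i \<le> a"
      using quot_coeff_nonzero assms by fastforce+
    moreover have "i \<noteq> a"
      using v \<open>v \<noteq> w\<close> word_eq_set_pair by auto
    ultimately show ?thesis
      unfolding v pair_perm_def by force
  next
    assume "v = set_pair w p (c, \<gamma>, \<epsilon>) (a, \<beta>, \<eta>)"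
    then show ?thesis
      using assms by (force simp: pair_perm_def)
  qed
qed

lemma Tc_basis_same_exp_lidx:
  assumes "c = a" "\<beta> = \<gamma>"
  shows "Tc_basis N p w = - delta w"
proof -
  have "Tc1_coeff (qK N) (a, \<beta>, \<epsilon>) (a, \<gamma>, \<eta>) X Y = 0" for X Y
    using assms by (cases X; cases Y) (simp add: quot_coeff_def)
  then have "Tc1_basis N p w = 0"
    using assms A B by (simp add: fun_eq_iff Tc1_basis_def)
  then show ?thesis
    by (simp add: Tc_basis_def)
qed

lemma Tc_basis_same_exp_lidx_desc:
  assumes "c = a" "\<gamma> < \<beta>"
  shows "Tc_basis N p w = - sc (qK N) (delta (set_pair w p (a, \<gamma>, \<epsilon>) (a, \<beta>, \<eta>)))"
proof -
  have "Tc1_basis N p w v = (delta w - sc (qK N) (delta (set_pair w p (a, \<gamma>, \<epsilon>) (a, \<beta>, \<eta>)))) v" for v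
  proof (cases "pair_variant w p v")
    case True
    obtain i \<beta>' \<epsilon>' i' \<gamma>' \<eta>' where X: "v ! p = (i, \<beta>', \<epsilon>')" and Y: "v ! Suc p = (i', \<gamma>', \<eta>')"
      by (cases "v ! p", cases "v ! Suc p") auto
    have "quot_coeff (qK N) \<beta> \<gamma> a a i = of_bool (i = a)"
      using assms by (simp add: quot_coeff_def)
    moreover have "Tc1_basis N p w v = Tc1_coeff (qK N) (a, \<beta>, \<epsilon>) (a, \<gamma>, \<eta>) (i, \<beta>', \<epsilon>') (i', \<gamma>', \<eta>')"
      using assms True X Y A B by (simp add: Tc1_basis_def)
    moreover have "delta w v = of_bool ((i, \<beta>', \<epsilon>') = (a, \<beta>, \<epsilon>) \<and> (i', \<gamma>', \<eta>') = (a, \<gamma>, \<eta>))"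
      using assms True X Y by (subst word_eq_set_pair) (simp add: delta_set_pair[OF pos])
    moreover have "delta (set_pair w p (a, \<gamma>, \<epsilon>) (a, \<beta>, \<eta>)) v
        = of_bool ((i, \<beta>', \<epsilon>') = (a, \<gamma>, \<epsilon>) \<and> (i', \<gamma>', \<eta>') = (a, \<beta>, \<eta>))"
      using True X Y by (simp add: delta_set_pair[OF pos])
    ultimately show ?thesis
      using assms by (auto simp: of_bool_def)
  next
    case False
    then show ?thesis
      by (subst (1 2) word_eq_set_pair) (simp add: Tc1_basis_def delta_set_pair[OF pos])
  qed
  then show ?thesis
    by (simp add: Tc_basis_def fun_eq_iff)
qed

end

lemma qK_pos: "0 < qK N"
proof -
  have "0 < ([:0, 1:] :: rat poly)"
    by (simp add: less_poly_def pos_poly_pCons)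
  then have "0 < tq"
    unfolding tq_def by (subst zero_less_Fract_iff) auto
  then show ?thesis
    unfolding qK_def by simp
qed

lemma qK_nonzero: "qK N \<noteq> 0"
  using qK_pos[of N] by simp

lemma one_plus_qK_sq_nonzero: "1 + (qK N)\<^sup>2 \<noteq> 0"
  using qK_pos[of N] by (metis add_pos_nonneg zero_le_power2 zero_less_one less_irrefl)

lemma finite_supp_Rop_delta: "finite (supp (Rop N p (delta w)))"
proof -
  have "supp (Rop N p (delta w)) \<subseteq> {zsh p w, zsh (Suc p) w, zsh p (swapL p w), zsh (Suc p) (swapL p w)}"
    unfolding Rop_def lin_ext_delta by (auto simp: supp_def Let_def delta_def split: if_splits)
  then show ?thesis
    by (rule finite_subset) simp
qed

lemma is_Tc_delta:
  assumes pos: "Suc p < length w"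
  shows "is_Tc N p (delta w) (Tc_basis N p w)"
proof -
  obtain a \<beta> \<epsilon> c \<gamma> \<eta> where A: "w ! p = (a, \<beta>, \<epsilon>)" and B: "w ! Suc p = (c, \<gamma>, \<eta>)"
    by (cases "w ! p", cases "w ! Suc p") auto
  note W = word_eq_set_pair[OF pos A B]
  let ?Q = "Tc1_basis N p w"
  have fin: "finite (supp ?Q)" "finite (supp (delta w))" "finite (supp (Rop N p (delta w)))"
    using finite_supp_Tc1_basis[OF pos A B] finite_supp_Rop_delta by simp_all
  have "?Q (zdec p v) - ?Q (zdec (Suc p) v)
      = delta w (zdec p v) - (qK N)\<^sup>2 * delta w (zdec (Suc p) v) + Rop N p (delta w) (swapc p v)" for v
  proof (cases "pair_variant w p v")
    case False
    then show ?thesis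
      by (subst (1 2) W) (simp add: Tc1_basis_def Rop_delta_apply[OF pos A B] delta_set_pair[OF pos] pos)
  next
    case True
    obtain i \<beta>' \<epsilon>' i' \<gamma>' \<eta>' where X: "v ! p = (i, \<beta>', \<epsilon>')" and Y: "v ! Suc p = (i', \<gamma>', \<eta>')"
      by (cases "v ! p", cases "v ! Suc p") auto
    have V: "v = set_pair w p (i, \<beta>', \<epsilon>') (i', \<gamma>', \<eta>')"
      using pair_variant_eq[OF pos True] X Y by simp
    show ?thesis
      unfolding V zdec_set_pair[OF pos] swap_set_pair[OF pos]
      using Tc1_coeff_division[of "qK N" "(a, \<beta>, \<epsilon>)" "(c, \<gamma>, \<eta>)" i \<beta>' \<epsilon>' i' \<gamma>' \<eta>'] A B
      by (subst (1 2) W) (simp add: Tc1_basis_def Rop_delta_apply[OF pos A B] delta_set_pair[OF pos] pos)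
  qed
  moreover have "Sop p (Rop N p (delta w)) v = Rop N p (delta w) (swapc p v)" for v
  proof (rule Sop_apply[OF fin(3)])
    fix u assume "Rop N p (delta w) u \<noteq> 0"
    then have "pair_variant w p u"
      by (auto simp: Rop_delta_apply[OF pos A B] split: if_splits)
    then show "Suc p < length u"
      using pos by (simp add: pair_variant_def)
  qed
  ultimately show ?thesis
    unfolding is_Tc_def Tc_basis_def by (simp add: fun_eq_iff Zop_apply fin)
qed

definition valid_entry :: "nat \<Rightarrow> nat \<Rightarrow> entry \<Rightarrow> bool" where
  "valid_entry N L x \<longleftrightarrow> 1 \<le> fst (snd x) \<and> fst (snd x) \<le> L \<and> 1 \<le> snd (snd x) \<and> snd (snd x) \<le> N"

lemma valid_word_iff: "valid_word N L r w \<longleftrightarrow> length w = r \<and> (\<forall>x\<in>set w. valid_entry N L x)"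
  unfolding valid_word_def valid_entry_def by auto

lemma valid_word_nth: "valid_word N L r w \<Longrightarrow> i < r \<Longrightarrow> valid_entry N L (w ! i)"
  unfolding valid_word_iff by auto

lemma valid_set_pair_perm:
  assumes "valid_word N L r w" "Suc p < r" "w ! p = (a, \<beta>, \<epsilon>)" "w ! Suc p = (c, \<gamma>, \<eta>)"
    and "pair_perm \<beta> \<gamma> \<beta>' \<gamma>'" "pair_perm \<epsilon> \<eta> \<epsilon>' \<eta>'"
  shows "valid_word N L r (set_pair w p (i, \<beta>', \<epsilon>') (i', \<gamma>', \<eta>'))"
proof -
  have "valid_entry N L (a, \<beta>, \<epsilon>)" "valid_entry N L (c, \<gamma>, \<eta>)"
    using valid_word_nth[OF assms(1)] assms(2-4) by (metis Suc_lessD lessI)+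
  then have "valid_entry N L (i, \<beta>', \<epsilon>')" "valid_entry N L (i', \<gamma>', \<eta>')"
    using assms(5,6) by (auto simp: valid_entry_def pair_perm_def)
  moreover have "set (set_pair w p X Y) \<subseteq> insert Y (insert X (set w))" for X Y
    unfolding set_pair_def by (meson order.trans set_update_subset_insert insert_mono)
  ultimately show ?thesis
    using assms(1,2) unfolding valid_word_iff by (fastforce simp: set_pair_def)
qed

lemma Tc_basis_tens:
  assumes "valid_word N L r w" "Suc p < r"
  shows "Tc_basis N p w \<in> tens_space N L r"
proof -
  obtain a \<beta> \<epsilon> c \<gamma> \<eta> where A: "w ! p = (a, \<beta>, \<epsilon>)" and B: "w ! Suc p = (c, \<gamma>, \<eta>)"
    by (cases "w ! p", cases "w ! Suc p") auto
  have pos: "Suc p < length w"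
    using assms by (simp add: valid_word_def)
  have supp: "supp (Tc_basis N p w) \<subseteq> insert w (supp (Tc1_basis N p w))"
    by (auto simp: supp_def Tc_basis_def delta_def)
  have "valid_word N L r v" if "v \<in> supp (Tc1_basis N p w)" for v
  proof -
    have "v = set_pair w p (c, \<gamma>, \<epsilon>) (a, \<beta>, \<eta>) \<or> (\<exists>i. v = set_pair w p (i, \<beta>, \<epsilon>) (a + c - i, \<gamma>, \<eta>))"
      using supp_Tc1_basis[OF pos A B] that by blast
    then show ?thesis
      by (auto intro!: valid_set_pair_perm[OF assms A B] simp: pair_perm_def)
  qed
  then show ?thesis
    using finite_subset[OF supp] finite_supp_Tc1_basis[OF pos A B] assms(1) supp
    unfolding tens_space_def supp_def by blast
qed

lemma Tc_Ts_in_rel_space: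
  assumes "valid_word N L r w" "Suc p < r"
  shows "Tc_basis N p w - Tsop N p (delta w) \<in> rel_space N L r"
proof -
  have "delta w \<in> tens_space N L r"
    using assms(1) unfolding tens_space_def by (auto simp: delta_def)
  moreover have "Suc p < length w"
    using assms by (simp add: valid_word_def)
  ultimately show ?thesis
    unfolding rel_space_def using assms Tc_basis_tens is_Tc_delta by (blast intro: fspan_base)
qed

lemma Tsop_delta:
  assumes "w ! p = (a, \<beta>, \<epsilon>)" "w ! Suc p = (c, \<gamma>, \<eta>)" "Suc p < length w"
  shows "Tsop N p (delta w) = (if \<epsilon> = \<eta> then sc ((qK N)\<^sup>2) (delta w)
     else if \<epsilon> < \<eta> then sc (qK N) (delta (set_pair w p (a, \<beta>, \<eta>) (c, \<gamma>, \<epsilon>)))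
     else sc (qK N) (delta (set_pair w p (a, \<beta>, \<eta>) (c, \<gamma>, \<epsilon>))) + sc ((qK N)\<^sup>2 - 1) (delta w))"
proof -
  have "swapN p w = set_pair w p (a, \<beta>, \<eta>) (c, \<gamma>, \<epsilon>)"
    by (subst word_eq_set_pair[OF assms(3,1,2)]) (simp add: swap_set_pair[OF assms(3)])
  then show ?thesis
    unfolding Tsop_def lin_ext_delta using assms by (simp add: Let_def)
qed

text \<open>The vectors whose image under \<wedge> lies in the span of the images of the basis words in S.\<close>
definition wedge_span :: "nat \<Rightarrow> nat \<Rightarrow> nat \<Rightarrow> word set \<Rightarrow> tens set" where
  "wedge_span N L r S = {f. \<exists>g \<in> fspan (delta ` S). f - g \<in> rel_space N L r}"

lemma rel_space_subset_wedge_span: "f \<in> rel_space N L r \<Longrightarrow> f \<in> wedge_span N L r S"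
  unfolding wedge_span_def using fspan_zero[of "delta ` S"] by force

lemma wedge_span_empty: "wedge_span N L r {} = rel_space N L r"
  unfolding wedge_span_def by auto

lemma delta_in_wedge_span:
  assumes "v \<in> S"
  shows "delta v \<in> wedge_span N L r S"
proof -
  have "delta v \<in> fspan (delta ` S)"
    using assms by (auto intro: fspan_base)
  moreover have "delta v - delta v \<in> rel_space N L r"
    by (simp add: rel_space_def fspan_zero)
  ultimately show ?thesis
    unfolding wedge_span_def by blast
qed

lemma wedge_span_add:
  assumes "f \<in> wedge_span N L r S" "h \<in> wedge_span N L r S"
  shows "f + h \<in> wedge_span N L r S"
proof -
  obtain g g' where "g \<in> fspan (delta ` S)" "f - g \<in> rel_space N L r"
    "g' \<in> fspan (delta ` S)" "h - g' \<in> rel_space N L r"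
    using assms unfolding wedge_span_def by blast
  moreover have "(f + h) - (g + g') = (f - g) + (h - g')"
    by (simp add: algebra_simps)
  ultimately show ?thesis
    unfolding wedge_span_def rel_space_def by (metis (mono_tags, lifting) fspan_add mem_Collect_eq)
qed

lemma wedge_span_sc:
  assumes "f \<in> wedge_span N L r S"
  shows "sc k f \<in> wedge_span N L r S"
proof -
  obtain g where "g \<in> fspan (delta ` S)" "f - g \<in> rel_space N L r"
    using assms unfolding wedge_span_def by blast
  moreover have "sc k f - sc k g = sc k (f - g)"
    by (simp add: fun_eq_iff algebra_simps)
  ultimately show ?thesis
    unfolding wedge_span_def rel_space_def by (metis (mono_tags, lifting) fspan_sc mem_Collect_eq)
qed

lemma wedge_span_diff:
  assumes "f \<in> wedge_span N L r S" "h \<in> wedge_span N L r S"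
  shows "f - h \<in> wedge_span N L r S"
proof -
  have "f + sc (-1) h \<in> wedge_span N L r S"
    using assms by (intro wedge_span_add wedge_span_sc)
  moreover have "f + sc (-1) h = f - h"
    by (simp add: fun_eq_iff)
  ultimately show ?thesis
    by simp
qed

lemma wedge_span_sum:
  "finite I \<Longrightarrow> (\<And>i. i \<in> I \<Longrightarrow> F i \<in> wedge_span N L r S) \<Longrightarrow> sum F I \<in> wedge_span N L r S"
  by (induction I rule: finite_induct)
    (auto intro: wedge_span_add rel_space_subset_wedge_span simp: rel_space_def fspan_zero)

lemma wedge_span_of_finite_supp:
  assumes "finite (supp f)" "\<And>v. v \<in> supp f \<Longrightarrow> delta v \<in> wedge_span N L r S"
  shows "f \<in> wedge_span N L r S"
  using sum_delta_expansion[OF assms(1) order_refl] assms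
  by (metis (no_types, lifting) wedge_span_sc wedge_span_sum)

lemma wedge_span_trans:
  assumes "\<And>v. v \<in> S \<Longrightarrow> delta v \<in> wedge_span N L r T" "f \<in> wedge_span N L r S"
  shows "f \<in> wedge_span N L r T"
proof -
  obtain g where g: "g \<in> fspan (delta ` S)" "f - g \<in> rel_space N L r"
    using assms(2) unfolding wedge_span_def by blast
  then obtain A c where A: "finite A" "A \<subseteq> delta ` S" "g = (\<Sum>h\<in>A. sc (c h) h)"
    unfolding fspan_def by blast
  have "g \<in> wedge_span N L r T"
    unfolding A(3) using A(1,2) assms(1) by (intro wedge_span_sum wedge_span_sc) auto
  moreover have "f - g \<in> wedge_span N L r T"
    using g(2) by (rule rel_space_subset_wedge_span)
  ultimately have "(f - g) + g \<in> wedge_span N L r T"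
    by (rule wedge_span_add[rotated])
  then show ?thesis
    by simp
qed

lemma wedge_span_mono: "S \<subseteq> T \<Longrightarrow> f \<in> wedge_span N L r S \<Longrightarrow> f \<in> wedge_span N L r T"
  by (rule wedge_span_trans[of S]) (auto intro: delta_in_wedge_span)

lemma wedge_span_cancel:
  assumes "sc k f + g \<in> wedge_span N L r S" "g \<in> wedge_span N L r S" "k \<noteq> 0"
  shows "f \<in> wedge_span N L r S"
proof -
  have "sc (1 / k) ((sc k f + g) - g) \<in> wedge_span N L r S"
    using assms by (intro wedge_span_sc wedge_span_diff)
  moreover have "sc (1 / k) ((sc k f + g) - g) = f"
    using assms(3) by (simp add: fun_eq_iff)
  ultimately show ?thesis
    by simp
qed

lemma wedge_span_sc_cancel:
  assumes "sc k f \<in> wedge_span N L r S" "k \<noteq> 0"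
  shows "f \<in> wedge_span N L r S"
proof -
  have "sc (1 / k) (sc k f) \<in> wedge_span N L r S"
    using assms(1) by (rule wedge_span_sc)
  then show ?thesis
    using assms(2) by (simp add: sc_def)
qed

section \<open>Local straightening rules\<close>

lemma Tsop_in_wedge_span_iff:
  assumes "valid_word N L r w" "Suc p < r"
  shows "Tsop N p (delta w) \<in> wedge_span N L r S \<longleftrightarrow> Tc_basis N p w \<in> wedge_span N L r S"
proof -
  have rel: "Tc_basis N p w - Tsop N p (delta w) \<in> wedge_span N L r S"
    using Tc_Ts_in_rel_space[OF assms] by (rule rel_space_subset_wedge_span)
  show ?thesis
  proof
    assume "Tsop N p (delta w) \<in> wedge_span N L r S"
    from wedge_span_add[OF rel this] show "Tc_basis N p w \<in> wedge_span N L r S"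
      by simp
  next
    assume "Tc_basis N p w \<in> wedge_span N L r S"
    from wedge_span_diff[OF this rel] show "Tsop N p (delta w) \<in> wedge_span N L r S"
      by simp
  qed
qed

text \<open>T^s is invertible on the span of a basis word and its copy with the two K^N-indices exchanged.\<close>
lemma delta_in_wedge_span_of_Tsop:
  assumes pos: "Suc p < length w" and A: "w ! p = (a, \<beta>, \<epsilon>)" and B: "w ! Suc p = (c, \<gamma>, \<eta>)"
    and Ts: "Tsop N p (delta w) \<in> wedge_span N L r S"
    and Ts': "Tsop N p (delta (set_pair w p (a, \<beta>, \<eta>) (c, \<gamma>, \<epsilon>))) \<in> wedge_span N L r S"
  shows "delta w \<in> wedge_span N L r S"
proof -
  let ?w' = "set_pair w p (a, \<beta>, \<eta>) (c, \<gamma>, \<epsilon>)"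
  have pos': "Suc p < length ?w'" and A': "?w' ! p = (a, \<beta>, \<eta>)" and B': "?w' ! Suc p = (c, \<gamma>, \<epsilon>)"
    using pos by simp_all
  have swap_back: "set_pair ?w' p (a, \<beta>, \<epsilon>) (c, \<gamma>, \<eta>) = w"
    using word_eq_set_pair[OF pos A B] by simp
  note q = qK_nonzero[of N]
  consider "\<epsilon> = \<eta>" | "\<epsilon> < \<eta>" | "\<eta> < \<epsilon>"
    by linarith
  then show ?thesis
  proof cases
    case 1
    then have "sc ((qK N)\<^sup>2) (delta w) \<in> wedge_span N L r S"
      using Ts Tsop_delta[OF A B pos] by simp
    then show ?thesis
      by (rule wedge_span_sc_cancel) (simp add: q)
  next
    case 2
    then have "sc (qK N) (delta ?w') \<in> wedge_span N L r S"
      using Ts Tsop_delta[OF A B pos] by simp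
    then have "delta ?w' \<in> wedge_span N L r S"
      using q by (rule wedge_span_sc_cancel)
    moreover have "sc (qK N) (delta w) + sc ((qK N)\<^sup>2 - 1) (delta ?w') \<in> wedge_span N L r S"
      using Ts' Tsop_delta[OF A' B' pos'] 2 swap_back by simp
    ultimately show ?thesis
      using q by (blast intro: wedge_span_cancel wedge_span_sc)
  next
    case 3
    then have "sc (qK N) (delta w) \<in> wedge_span N L r S"
      using Ts' Tsop_delta[OF A' B' pos'] swap_back by simp
    then show ?thesis
      using q by (rule wedge_span_sc_cancel)
  qed
qed

lemma Tc_basis_in_wedge_span:
  assumes "valid_word N L r w" "Suc p < r" "supp (Tc_basis N p w) \<subseteq> S"
  shows "Tc_basis N p w \<in> wedge_span N L r S"
proof (rule wedge_span_of_finite_supp)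
  show "finite (supp (Tc_basis N p w))"
    using Tc_basis_tens[OF assms(1,2)] by (simp add: tens_space_def supp_def)
  show "delta v \<in> wedge_span N L r S" if "v \<in> supp (Tc_basis N p w)" for v
    using assms(3) that by (blast intro: delta_in_wedge_span)
qed

context
  fixes N L r :: nat and w :: word and p :: nat and a c :: int and \<beta> \<gamma> \<epsilon> \<eta> :: nat
  assumes valid: "valid_word N L r w" and pos: "Suc p < r"
    and A: "w ! p = (a, \<beta>, \<epsilon>)" and B: "w ! Suc p = (c, \<gamma>, \<eta>)"
begin

lemma pos_length: "Suc p < length w"
  using valid pos by (simp add: valid_word_def)

lemma valid_nidx_swap: "valid_word N L r (set_pair w p (a, \<beta>, \<eta>) (c, \<gamma>, \<epsilon>))"
  by (rule valid_set_pair_perm[OF valid pos A B]) (auto simp: pair_perm_def)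

lemma nidx_swap_nth: "set_pair w p (a, \<beta>, \<eta>) (c, \<gamma>, \<epsilon>) ! p = (a, \<beta>, \<eta>)"
  "set_pair w p (a, \<beta>, \<eta>) (c, \<gamma>, \<epsilon>) ! Suc p = (c, \<gamma>, \<epsilon>)"
  "Suc p < length (set_pair w p (a, \<beta>, \<eta>) (c, \<gamma>, \<epsilon>))"
  using pos_length by simp_all

lemma delta_in_wedge_span_of_Tc:
  assumes "Tc_basis N p w \<in> wedge_span N L r S"
    and "Tc_basis N p (set_pair w p (a, \<beta>, \<eta>) (c, \<gamma>, \<epsilon>)) \<in> wedge_span N L r S"
  shows "delta w \<in> wedge_span N L r S"
  using assms Tsop_in_wedge_span_iff[OF valid pos] Tsop_in_wedge_span_iff[OF valid_nidx_swap pos]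
  by (intro delta_in_wedge_span_of_Tsop[OF pos_length A B]) simp_all

lemma delta_in_wedge_span_exp_desc:
  assumes "c < a"
  shows "delta w \<in> wedge_span N L r {set_pair w p (i, \<beta>', \<epsilon>') (a + c - i, \<gamma>', \<eta>') | i \<beta>' \<gamma>' \<epsilon>' \<eta>'.
    c \<le> i \<and> i < a \<and> pair_perm \<beta> \<gamma> \<beta>' \<gamma>' \<and> pair_perm \<epsilon> \<eta> \<epsilon>' \<eta>'}"
    (is "_ \<in> wedge_span N L r ?O")
proof (rule delta_in_wedge_span_of_Tc)
  have "supp (Tc_basis N p w) \<subseteq> ?O"
  proof
    fix v assume "v \<in> supp (Tc_basis N p w)"
    then obtain i \<beta>' \<gamma>' where "v = set_pair w p (i, \<beta>', \<epsilon>) (a + c - i, \<gamma>', \<eta>)"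
      "c \<le> i" "i < a" "pair_perm \<beta> \<gamma> \<beta>' \<gamma>'"
      using supp_Tc_basis[OF pos_length A B assms] by blast
    moreover have "pair_perm \<epsilon> \<eta> \<epsilon> \<eta>"
      by (simp add: pair_perm_def)
    ultimately show "v \<in> ?O"
      by blast
  qed
  then show "Tc_basis N p w \<in> wedge_span N L r ?O"
    by (rule Tc_basis_in_wedge_span[OF valid pos])
  have "supp (Tc_basis N p (set_pair w p (a, \<beta>, \<eta>) (c, \<gamma>, \<epsilon>))) \<subseteq> ?O"
  proof
    fix v assume "v \<in> supp (Tc_basis N p (set_pair w p (a, \<beta>, \<eta>) (c, \<gamma>, \<epsilon>)))"
    then obtain i \<beta>' \<gamma>' where "v = set_pair w p (i, \<beta>', \<eta>) (a + c - i, \<gamma>', \<epsilon>)"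
      "c \<le> i" "i < a" "pair_perm \<beta> \<gamma> \<beta>' \<gamma>'"
      using supp_Tc_basis[OF nidx_swap_nth(3,1,2) assms] unfolding set_pair_set_pair by blast
    moreover have "pair_perm \<epsilon> \<eta> \<eta> \<epsilon>"
      by (simp add: pair_perm_def)
    ultimately show "v \<in> ?O"
      by blast
  qed
  then show "Tc_basis N p (set_pair w p (a, \<beta>, \<eta>) (c, \<gamma>, \<epsilon>)) \<in> wedge_span N L r ?O"
    by (rule Tc_basis_in_wedge_span[OF valid_nidx_swap pos])
qed

lemma delta_in_wedge_span_lidx_desc:
  assumes "c = a" "\<gamma> < \<beta>"
  shows "delta w \<in> wedge_span N L r {set_pair w p (a, \<gamma>, \<epsilon>) (a, \<beta>, \<eta>), set_pair w p (a, \<gamma>, \<eta>) (a, \<beta>, \<epsilon>)}"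
proof (rule delta_in_wedge_span_of_Tc)
  show "Tc_basis N p w \<in> wedge_span N L r {set_pair w p (a, \<gamma>, \<epsilon>) (a, \<beta>, \<eta>), set_pair w p (a, \<gamma>, \<eta>) (a, \<beta>, \<epsilon>)}"
    unfolding Tc_basis_same_exp_lidx_desc[OF pos_length A B assms] uminus_sc
    by (intro wedge_span_sc delta_in_wedge_span) simp
  show "Tc_basis N p (set_pair w p (a, \<beta>, \<eta>) (c, \<gamma>, \<epsilon>))
      \<in> wedge_span N L r {set_pair w p (a, \<gamma>, \<epsilon>) (a, \<beta>, \<eta>), set_pair w p (a, \<gamma>, \<eta>) (a, \<beta>, \<epsilon>)}"
    unfolding Tc_basis_same_exp_lidx_desc[OF nidx_swap_nth(3,1,2) assms] uminus_sc
    by (intro wedge_span_sc delta_in_wedge_span) simp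
qed

lemma delta_in_wedge_span_equal_entries:
  assumes "c = a" "\<beta> = \<gamma>" "\<epsilon> = \<eta>"
  shows "delta w \<in> wedge_span N L r {}"
proof (rule wedge_span_sc_cancel)
  have "Tc_basis N p w - Tsop N p (delta w) = sc (- (1 + (qK N)\<^sup>2)) (delta w)"
    using Tc_basis_same_exp_lidx[OF pos_length A B assms(1,2)] Tsop_delta[OF A B pos_length] assms(3)
    by (simp add: fun_eq_iff algebra_simps)
  then show "sc (- (1 + (qK N)\<^sup>2)) (delta w) \<in> wedge_span N L r {}"
    using Tc_Ts_in_rel_space[OF valid pos] by (simp add: wedge_span_empty)
  show "- (1 + (qK N)\<^sup>2) \<noteq> 0"
    by (simp only: neg_equal_0_iff_equal) (rule one_plus_qK_sq_nonzero)
qed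

lemma delta_in_wedge_span_nidx_asc:
  assumes "c = a" "\<beta> = \<gamma>" "\<epsilon> < \<eta>"
  shows "delta w \<in> wedge_span N L r {set_pair w p (a, \<beta>, \<eta>) (a, \<beta>, \<epsilon>)}"
proof (rule wedge_span_cancel)
  have "Tc_basis N p w - Tsop N p (delta w) = sc (- 1) (delta w) + sc (- qK N) (delta (set_pair w p (a, \<beta>, \<eta>) (a, \<beta>, \<epsilon>)))"
    using Tc_basis_same_exp_lidx[OF pos_length A B assms(1,2)] Tsop_delta[OF A B pos_length] assms
    by (simp add: fun_eq_iff algebra_simps)
  then show "sc (- 1) (delta w) + sc (- qK N) (delta (set_pair w p (a, \<beta>, \<eta>) (a, \<beta>, \<epsilon>)))
      \<in> wedge_span N L r {set_pair w p (a, \<beta>, \<eta>) (a, \<beta>, \<epsilon>)}"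
    using Tc_Ts_in_rel_space[OF valid pos] by (metis rel_space_subset_wedge_span)
qed (auto intro: wedge_span_sc delta_in_wedge_span)

end

section \<open>Straightening\<close>

fun inversions :: "'a::linorder list \<Rightarrow> nat" where
  "inversions [] = 0"
| "inversions (x # xs) = length (filter (\<lambda>y. y < x) xs) + inversions xs"

lemma length_filter_swap:
  "Suc p < length xs \<Longrightarrow> length (filter P (xs[p := xs ! Suc p, Suc p := xs ! p])) = length (filter P xs)"
proof (induction xs arbitrary: p)
  case (Cons x xs)
  then show ?case
    by (cases p; cases xs) auto
qed simp

lemma inversions_swap:
  "Suc p < length xs \<Longrightarrow> xs ! Suc p < xs ! p \<Longrightarrow> inversions (xs[p := xs ! Suc p, Suc p := xs ! p]) < inversions xs"
proof (induction xs arbitrary: p)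
  case (Cons x xs)
  show ?case
  proof (cases p)
    case 0
    with Cons.prems show ?thesis
      by (cases xs) auto
  next
    case (Suc p')
    with Cons show ?thesis
      using length_filter_swap[of p' xs] by simp
  qed
qed simp

definition exp_energy :: "word \<Rightarrow> nat" where
  "exp_energy w = nat (\<Sum>x\<leftarrow>w. (fst x)\<^sup>2)"

text \<open>Every local straightening move decreases this measure lexicographically.\<close>
definition straighten_measure :: "word \<Rightarrow> nat \<times> nat \<times> nat \<times> nat" where
  "straighten_measure w = (exp_energy w, inversions (map fst w), inversions (map (\<lambda>x. fst (snd x)) w),
     inversions (map (\<lambda>x. - int (snd (snd x))) w))"

definition straighten_rel :: "(word \<times> word) set" where
  "straighten_rel = inv_image (less_than <*lex*> less_than <*lex*> less_than <*lex*> less_than) straighten_measure"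

lemma wf_straighten_rel: "wf straighten_rel"
  unfolding straighten_rel_def by auto

lemma map_set_pair: "Suc p < length w \<Longrightarrow> map h (set_pair w p X Y) = (map h w)[p := h X, Suc p := h Y]"
  by (simp add: set_pair_def map_update)

lemma map_set_pair_same:
  assumes "Suc p < length w" "h X = h (w ! p)" "h Y = h (w ! Suc p)"
  shows "map h (set_pair w p X Y) = map h w"
  using assms by (simp add: map_set_pair map_update[symmetric])

lemma inversions_map_set_pair:
  assumes "Suc p < length w" "h X = h (w ! Suc p)" "h Y = h (w ! p)" "h (w ! Suc p) < h (w ! p)"
  shows "inversions (map h (set_pair w p X Y)) < inversions (map h w)"
  using assms inversions_swap[of p "map h w"] by (simp add: map_set_pair)

lemma sum_list_update_int:
  fixes xs :: "int list"
  shows "k < length xs \<Longrightarrow> sum_list (xs[k := x]) = sum_list xs + x - xs ! k"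
proof (induction xs arbitrary: k)
  case (Cons y ys)
  then show ?case
    by (cases k) auto
qed simp

lemma sum_list_map_set_pair:
  fixes g :: "entry \<Rightarrow> int"
  assumes "Suc p < length w"
  shows "(\<Sum>x\<leftarrow>set_pair w p X Y. g x) = (\<Sum>x\<leftarrow>w. g x) - g (w ! p) - g (w ! Suc p) + g X + g Y"
  using assms by (simp add: map_set_pair sum_list_update_int nth_list_update)

lemma straighten_rel_energy:
  assumes "Suc p < length w" "(fst X)\<^sup>2 + (fst Y)\<^sup>2 < (fst (w ! p))\<^sup>2 + (fst (w ! Suc p))\<^sup>2"
  shows "(set_pair w p X Y, w) \<in> straighten_rel"
proof -
  have nonneg: "0 \<le> (\<Sum>x\<leftarrow>v. (fst x)\<^sup>2)" for v :: word
    by (induction v) auto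
  have "(\<Sum>x\<leftarrow>set_pair w p X Y. (fst x)\<^sup>2) < (\<Sum>x\<leftarrow>w. (fst x)\<^sup>2)"
    using sum_list_map_set_pair[OF assms(1), of "\<lambda>x. (fst x)\<^sup>2"] assms(2) by simp
  then have "exp_energy (set_pair w p X Y) < exp_energy w"
    using nonneg[of "set_pair w p X Y"] unfolding exp_energy_def by (simp add: nat_less_eq_zless)
  then show ?thesis
    by (simp add: straighten_rel_def straighten_measure_def)
qed

lemma exp_energy_cong:
  assumes "map fst v = map fst w"
  shows "exp_energy v = exp_energy w"
proof -
  have "(\<Sum>x\<leftarrow>u. (fst x)\<^sup>2) = (\<Sum>i\<leftarrow>map fst u. i\<^sup>2)" for u :: word
    by (induction u) auto
  then show ?thesis
    unfolding exp_energy_def using assms by metis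
qed

lemma straighten_rel_exp_swap:
  assumes "Suc p < length w" "fst X = fst (w ! Suc p)" "fst Y = fst (w ! p)" "fst (w ! Suc p) < fst (w ! p)"
  shows "(set_pair w p X Y, w) \<in> straighten_rel"
proof -
  have "exp_energy (set_pair w p X Y) = exp_energy w"
    using sum_list_map_set_pair[OF assms(1), of "\<lambda>x. (fst x)\<^sup>2"] assms(2,3) by (simp add: exp_energy_def)
  moreover have "inversions (map fst (set_pair w p X Y)) < inversions (map fst w)"
    using inversions_map_set_pair[OF assms] .
  ultimately show ?thesis
    by (simp add: straighten_rel_def straighten_measure_def)
qed

lemma straighten_rel_lidx_swap:
  assumes "Suc p < length w" "fst X = fst (w ! p)" "fst Y = fst (w ! Suc p)"
    and "fst (snd X) = fst (snd (w ! Suc p))" "fst (snd Y) = fst (snd (w ! p))"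
    and "fst (snd (w ! Suc p)) < fst (snd (w ! p))"
  shows "(set_pair w p X Y, w) \<in> straighten_rel"
proof -
  have "map fst (set_pair w p X Y) = map fst w"
    using map_set_pair_same[OF assms(1), of fst] assms(2,3) by simp
  moreover have "exp_energy (set_pair w p X Y) = exp_energy w"
    using calculation by (rule exp_energy_cong)
  moreover have "inversions (map (\<lambda>x. fst (snd x)) (set_pair w p X Y)) < inversions (map (\<lambda>x. fst (snd x)) w)"
    using inversions_map_set_pair[OF assms(1), of "\<lambda>x. fst (snd x)"] assms(4-6) by simp
  ultimately show ?thesis
    by (simp add: straighten_rel_def straighten_measure_def)
qed

lemma straighten_rel_nidx_swap:
  assumes "Suc p < length w" "fst X = fst (w ! p)" "fst Y = fst (w ! Suc p)"
    and "fst (snd X) = fst (snd (w ! p))" "fst (snd Y) = fst (snd (w ! Suc p))"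
    and "snd (snd X) = snd (snd (w ! Suc p))" "snd (snd Y) = snd (snd (w ! p))"
    and "snd (snd (w ! p)) < snd (snd (w ! Suc p))"
  shows "(set_pair w p X Y, w) \<in> straighten_rel"
proof -
  have "map fst (set_pair w p X Y) = map fst w"
    using map_set_pair_same[OF assms(1), of fst] assms(2,3) by simp
  moreover have "exp_energy (set_pair w p X Y) = exp_energy w"
    using calculation by (rule exp_energy_cong)
  moreover have "map (\<lambda>x. fst (snd x)) (set_pair w p X Y) = map (\<lambda>x. fst (snd x)) w"
    using map_set_pair_same[OF assms(1), of "\<lambda>x. fst (snd x)"] assms(4,5) by simp
  moreover have "inversions (map (\<lambda>x. - int (snd (snd x))) (set_pair w p X Y))
      < inversions (map (\<lambda>x. - int (snd (snd x))) w)"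
    using inversions_map_set_pair[OF assms(1), of "\<lambda>x. - int (snd (snd x))"] assms(6-8) by simp
  ultimately show ?thesis
    by (simp add: straighten_rel_def straighten_measure_def)
qed

definition pair_move :: "entry \<Rightarrow> entry \<Rightarrow> entry \<Rightarrow> entry \<Rightarrow> bool" where
  "pair_move A B X Y \<longleftrightarrow> fst X + fst Y = fst A + fst B \<and> fst B \<le> fst X \<and> fst X \<le> fst A \<and>
     pair_perm (fst (snd A)) (fst (snd B)) (fst (snd X)) (fst (snd Y)) \<and>
     pair_perm (snd (snd A)) (snd (snd B)) (snd (snd X)) (snd (snd Y))"

definition local_move :: "word \<Rightarrow> nat \<Rightarrow> word \<Rightarrow> bool" where
  "local_move w p v \<longleftrightarrow> (v, w) \<in> straighten_rel \<and> (\<exists>X Y. v = set_pair w p X Y \<and> pair_move (w ! p) (w ! Suc p) X Y)"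

lemma valid_local_move:
  assumes "valid_word N L r w" "Suc p < r" "local_move w p v"
  shows "valid_word N L r v"
proof -
  obtain a \<beta> \<epsilon> c \<gamma> \<eta> where A: "w ! p = (a, \<beta>, \<epsilon>)" and B: "w ! Suc p = (c, \<gamma>, \<eta>)"
    by (cases "w ! p", cases "w ! Suc p") auto
  obtain X Y where v: "v = set_pair w p X Y" and move: "pair_move (w ! p) (w ! Suc p) X Y"
    using assms(3) unfolding local_move_def by blast
  obtain i \<beta>' \<epsilon>' i' \<gamma>' \<eta>' where XY: "X = (i, \<beta>', \<epsilon>')" "Y = (i', \<gamma>', \<eta>')"
    by (cases X, cases Y) auto
  have "pair_perm \<beta> \<gamma> \<beta>' \<gamma>'" "pair_perm \<epsilon> \<eta> \<epsilon>' \<eta>'"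
    using move unfolding A B XY pair_move_def by simp_all
  then show ?thesis
    unfolding v XY by (rule valid_set_pair_perm[OF assms(1,2) A B])
qed

lemma kidx_less:
  assumes "valid_entry N L (a, \<beta>, \<epsilon>)" "valid_entry N L (c, \<gamma>, \<eta>)"
    and "a < c \<or> (a = c \<and> (\<beta> < \<gamma> \<or> (\<beta> = \<gamma> \<and> \<eta> < \<epsilon>)))"
  shows "kidx N L (c, \<gamma>, \<eta>) < kidx N L (a, \<beta>, \<epsilon>)"
proof -
  have r: "1 \<le> \<beta>" "\<beta> \<le> L" "1 \<le> \<epsilon>" "\<epsilon> \<le> N" "1 \<le> \<gamma>" "\<gamma> \<le> L" "1 \<le> \<eta>" "\<eta> \<le> N"
    using assms(1,2) by (auto simp: valid_entry_def)
  have kA: "kidx N L (a, \<beta>, \<epsilon>) = int \<epsilon> - int N * int \<beta> - int N * int L * a"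
    and kB: "kidx N L (c, \<gamma>, \<eta>) = int \<eta> - int N * int \<gamma> - int N * int L * c"
    by (simp_all add: kidx_def algebra_simps)
  consider "a < c" | "a = c" "\<beta> < \<gamma>" | "a = c" "\<beta> = \<gamma>" "\<eta> < \<epsilon>"
    using assms(3) by blast
  then show ?thesis
  proof cases
    case 1
    have "int N * int L * (a + 1) \<le> int N * int L * c" "int N * int \<beta> \<le> int N * int L"
      "int N * 1 \<le> int N * int \<gamma>"
      using 1 r by (auto intro: mult_left_mono)
    moreover have "int N * int L * (a + 1) = int N * int L * a + int N * int L"
      by (simp add: algebra_simps)
    ultimately show ?thesis
      unfolding kA kB using r by linarith
  next
    case 2
    have "int N * (int \<beta> + 1) \<le> int N * int \<gamma>"
      using 2 by (intro mult_left_mono) auto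
    then show ?thesis
      unfolding kA kB using 2 r by (simp add: algebra_simps)
  next
    case 3
    then show ?thesis
      unfolding kA kB by simp
  qed
qed

context
  fixes w :: word and p :: nat and a c :: int and \<beta> \<gamma> \<epsilon> \<eta> :: nat
  assumes pos: "Suc p < length w" and A: "w ! p = (a, \<beta>, \<epsilon>)" and B: "w ! Suc p = (c, \<gamma>, \<eta>)"
begin

lemma local_move_exp_desc:
  assumes "c \<le> i" "i < a" "pair_perm \<beta> \<gamma> \<beta>' \<gamma>'" "pair_perm \<epsilon> \<eta> \<epsilon>' \<eta>'"
  shows "local_move w p (set_pair w p (i, \<beta>', \<epsilon>') (a + c - i, \<gamma>', \<eta>'))"
proof -
  have "(set_pair w p (i, \<beta>', \<epsilon>') (a + c - i, \<gamma>', \<eta>'), w) \<in> straighten_rel"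
  proof (cases "c < i")
    case True
    have "i\<^sup>2 + (a + c - i)\<^sup>2 - (a\<^sup>2 + c\<^sup>2) = 2 * ((i - a) * (i - c))"
      by (simp add: power2_eq_square algebra_simps)
    moreover have "(i - a) * (i - c) < 0"
      using True assms(2) by (simp add: mult_neg_pos)
    ultimately show ?thesis
      using A B by (intro straighten_rel_energy[OF pos]) simp
  next
    case False
    then show ?thesis
      using A B assms(1,2) by (intro straighten_rel_exp_swap[OF pos]) simp_all
  qed
  then show ?thesis
    unfolding local_move_def pair_move_def using A B assms
    by (intro conjI exI[of _ "(i, \<beta>', \<epsilon>')"] exI[of _ "(a + c - i, \<gamma>', \<eta>')"]) auto
qed

lemma local_move_lidx_desc:
  assumes "c = a" "\<gamma> < \<beta>" "pair_perm \<epsilon> \<eta> \<epsilon>' \<eta>'"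
  shows "local_move w p (set_pair w p (a, \<gamma>, \<epsilon>') (a, \<beta>, \<eta>'))"
proof -
  have "(set_pair w p (a, \<gamma>, \<epsilon>') (a, \<beta>, \<eta>'), w) \<in> straighten_rel"
    using A B assms by (intro straighten_rel_lidx_swap[OF pos]) simp_all
  then show ?thesis
    unfolding local_move_def pair_move_def pair_perm_def using A B assms
    by (intro conjI exI[of _ "(a, \<gamma>, \<epsilon>')"] exI[of _ "(a, \<beta>, \<eta>')"]) (auto simp: pair_perm_def)
qed

lemma local_move_nidx_asc:
  assumes "c = a" "\<beta> = \<gamma>" "\<epsilon> < \<eta>"
  shows "local_move w p (set_pair w p (a, \<beta>, \<eta>) (a, \<beta>, \<epsilon>))"
proof -
  have "(set_pair w p (a, \<beta>, \<eta>) (a, \<beta>, \<epsilon>), w) \<in> straighten_rel"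
    using A B assms by (intro straighten_rel_nidx_swap[OF pos]) simp_all
  then show ?thesis
    unfolding local_move_def pair_move_def using A B assms
    by (intro conjI exI[of _ "(a, \<beta>, \<eta>)"] exI[of _ "(a, \<beta>, \<epsilon>)"]) (auto simp: pair_perm_def)
qed

end

lemma straighten_step:
  assumes valid: "valid_word N L r w" and pos: "Suc p < r"
    and unordered: "\<not> kidx N L (w ! Suc p) < kidx N L (w ! p)"
  shows "delta w \<in> wedge_span N L r {v. local_move w p v}"
proof -
  obtain a \<beta> \<epsilon> c \<gamma> \<eta> where A: "w ! p = (a, \<beta>, \<epsilon>)" and B: "w ! Suc p = (c, \<gamma>, \<eta>)"
    by (cases "w ! p", cases "w ! Suc p") auto
  have pw: "Suc p < length w"
    using valid pos by (simp add: valid_word_def)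
  have "valid_entry N L (a, \<beta>, \<epsilon>)" "valid_entry N L (c, \<gamma>, \<eta>)"
    using valid_word_nth[OF valid, of p] valid_word_nth[OF valid, of "Suc p"] pos A B by simp_all
  then have "\<not> (a < c \<or> (a = c \<and> (\<beta> < \<gamma> \<or> (\<beta> = \<gamma> \<and> \<eta> < \<epsilon>))))"
    using kidx_less unordered A B by metis
  then consider "c < a" | "c = a" "\<gamma> < \<beta>" | "c = a" "\<beta> = \<gamma>" "\<epsilon> = \<eta>" | "c = a" "\<beta> = \<gamma>" "\<epsilon> < \<eta>"
    by linarith
  then show ?thesis
  proof cases
    case 1
    show ?thesis
      by (rule wedge_span_mono[OF _ delta_in_wedge_span_exp_desc[OF valid pos A B 1]])
        (auto intro: local_move_exp_desc[OF pw A B])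
  next
    case 2
    have "pair_perm \<epsilon> \<eta> \<epsilon> \<eta>" "pair_perm \<epsilon> \<eta> \<eta> \<epsilon>"
      by (simp_all add: pair_perm_def)
    then have "local_move w p (set_pair w p (a, \<gamma>, \<epsilon>) (a, \<beta>, \<eta>))" "local_move w p (set_pair w p (a, \<gamma>, \<eta>) (a, \<beta>, \<epsilon>))"
      by (auto intro: local_move_lidx_desc[OF pw A B 2])
    then show ?thesis
      by (intro wedge_span_mono[OF _ delta_in_wedge_span_lidx_desc[OF valid pos A B 2]]) auto
  next
    case 3
    show ?thesis
      by (rule wedge_span_mono[OF _ delta_in_wedge_span_equal_entries[OF valid pos A B 3]]) simp
  next
    case 4
    show ?thesis
      by (rule wedge_span_mono[OF _ delta_in_wedge_span_nidx_asc[OF valid pos A B 4]])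
        (auto intro: local_move_nidx_asc[OF pw A B 4])
  qed
qed

definition normal_from :: "nat \<Rightarrow> nat \<Rightarrow> nat \<Rightarrow> word \<Rightarrow> bool" where
  "normal_from N L n w \<longleftrightarrow> (\<forall>q. n \<le> q \<longrightarrow> Suc q < length w \<longrightarrow> kidx N L (w ! Suc q) < kidx N L (w ! q))"

theorem straighten:
  assumes "valid_word N L r w" "P w"
    and P_local_move: "\<And>w p v. valid_word N L r w \<Longrightarrow> P w \<Longrightarrow> n \<le> p \<Longrightarrow> Suc p < r \<Longrightarrow> local_move w p v \<Longrightarrow> P v"
  shows "delta w \<in> wedge_span N L r {v. valid_word N L r v \<and> P v \<and> normal_from N L n v}"
  using assms(1,2)
proof (induction w rule: wf_induct[OF wf_straighten_rel])
  case (1 w)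
  show ?case
  proof (cases "normal_from N L n w")
    case True
    then show ?thesis
      using 1(2,3) by (intro delta_in_wedge_span) simp
  next
    case False
    then obtain p where p: "n \<le> p" "Suc p < r" "\<not> kidx N L (w ! Suc p) < kidx N L (w ! p)"
      using 1(2) unfolding normal_from_def valid_word_def by auto
    have "delta v \<in> wedge_span N L r {v. valid_word N L r v \<and> P v \<and> normal_from N L n v}"
      if "local_move w p v" for v
      using 1 p that P_local_move valid_local_move by (meson local_move_def)
    then show ?thesis
      using straighten_step[OF 1(2) p(2,3)] by (rule wedge_span_trans) simp
  qed
qed

lemma normal_from_chain:
  assumes "normal_from N L n v" "n \<le> i" "i \<le> j" "j < length v"
  shows "kidx N L (v ! j) + int (j - i) \<le> kidx N L (v ! i)"
  using assms(3,4)
proof (induction j)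
  case (Suc j)
  show ?case
  proof (cases "i = Suc j")
    case False
    then have "i \<le> j"
      using Suc.prems by simp
    moreover have "kidx N L (v ! Suc j) < kidx N L (v ! j)"
      using assms(1,2) Suc.prems \<open>i \<le> j\<close> unfolding normal_from_def by simp
    ultimately show ?thesis
      using Suc by (simp add: Suc_diff_le)
  qed simp
qed simp

lemma filter_length_set_pair:
  assumes "Suc p < length xs"
  shows "length (filter P (xs[p := x, Suc p := y])) + of_bool (P (xs ! p)) + of_bool (P (xs ! Suc p))
    = length (filter P xs) + of_bool (P x) + (of_bool (P y) :: nat)"
proof -
  have upd: "length (filter P (ys[k := z])) + of_bool (P (ys ! k)) = length (filter P ys) + (of_bool (P z) :: nat)"
    if "k < length ys" for ys :: "'a list" and k z
    using that
  proof (induction ys arbitrary: k)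
    case (Cons u us)
    then show ?case
      by (cases k) auto
  qed simp
  show ?thesis
    using upd[of p xs x] upd[of "Suc p" "xs[p := x]" y] assms by simp
qed

definition exps_bounded :: "int \<Rightarrow> nat \<Rightarrow> word \<Rightarrow> bool" where
  "exps_bounded m t w \<longleftrightarrow> (\<forall>x\<in>set w. fst x \<le> m) \<and> length (filter (\<lambda>x. fst x = m) w) < t"

lemma exps_bounded_local_move:
  assumes "exps_bounded m t w" "Suc p < length w" "local_move w p v"
  shows "exps_bounded m t v"
proof -
  obtain X Y where v: "v = set_pair w p X Y" and move: "pair_move (w ! p) (w ! Suc p) X Y"
    using assms(3) unfolding local_move_def by blast
  let ?a = "fst (w ! p)" and ?c = "fst (w ! Suc p)"
  have a: "?a \<le> m" and c: "?c \<le> m"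
    using assms(1,2) nth_mem[of p w] nth_mem[of "Suc p" w] unfolding exps_bounded_def by simp_all
  have X: "?c \<le> fst X" "fst X \<le> ?a" and Y: "fst Y = ?a + ?c - fst X"
    using move unfolding pair_move_def by simp_all
  have count: "of_bool (fst X = m) + of_bool (fst Y = m) \<le> of_bool (?a = m) + (of_bool (?c = m) :: nat)"
  proof (cases "fst X = m")
    case True
    then have "?a = m" "fst Y = ?c"
      using X Y a by simp_all
    then show ?thesis
      using True by simp
  next
    case False
    have "fst Y = m \<Longrightarrow> ?a = m"
      using X Y a by simp
    then show ?thesis
      using False by (cases "fst Y = m") simp_all
  qed
  have "set v \<subseteq> insert Y (insert X (set w))"
    using set_update_subset_insert[of "w[p := X]" "Suc p" Y] set_update_subset_insert[of w p X]
    unfolding v set_pair_def by blast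
  moreover have "fst X \<le> m" "fst Y \<le> m"
    using X Y a by simp_all
  ultimately have "\<forall>x\<in>set v. fst x \<le> m"
    using assms(1) unfolding exps_bounded_def by blast
  moreover have "length (filter (\<lambda>x. fst x = m) v) \<le> length (filter (\<lambda>x. fst x = m) w)"
    using filter_length_set_pair[OF assms(2), of "\<lambda>x. fst x = m" X Y] count
    unfolding v set_pair_def by linarith
  ultimately show ?thesis
    using assms(1) unfolding exps_bounded_def by simp
qed

definition crowded_tail :: "nat \<Rightarrow> nat \<Rightarrow> int \<Rightarrow> nat \<Rightarrow> nat \<Rightarrow> word \<Rightarrow> bool" where
  "crowded_tail N n m c j w \<longleftrightarrow>
    (\<forall>i. n \<le> i \<and> i < length w \<longrightarrow> fst (w ! i) = m \<and> N - c + 1 \<le> snd (snd (w ! i))) \<and>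
    c < card {i. n \<le> i \<and> i < length w \<and> fst (snd (w ! i)) = j}"

lemma card_positions_transpose:
  assumes "n \<le> p" "Suc p < r" "\<And>i. i < r \<Longrightarrow> g i = h (Transposition.transpose p (Suc p) i)"
  shows "card {i. n \<le> i \<and> i < r \<and> g i = j} = card {i. n \<le> i \<and> i < r \<and> h i = j}"
proof -
  let ?t = "Transposition.transpose p (Suc p)"
  have "{i. n \<le> i \<and> i < r \<and> g i = j} = ?t ` {i. n \<le> i \<and> i < r \<and> h i = j}"
  proof (rule set_eqI)
    fix i
    have "n \<le> ?t i \<and> ?t i < r \<longleftrightarrow> n \<le> i \<and> i < r"
      using assms(1,2) by (auto simp: Transposition.transpose_def)
    then show "i \<in> {i. n \<le> i \<and> i < r \<and> g i = j} \<longleftrightarrow> i \<in> ?t ` {i. n \<le> i \<and> i < r \<and> h i = j}"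
      using assms(3)[of i] by (auto simp: in_transpose_image_iff)
  qed
  then show ?thesis
    by (simp add: card_image)
qed

lemma crowded_tail_local_move:
  assumes "crowded_tail N n m c j w" "n \<le> p" "Suc p < length w" "local_move w p v"
  shows "crowded_tail N n m c j v"
proof -
  obtain X Y where v: "v = set_pair w p X Y" and move: "pair_move (w ! p) (w ! Suc p) X Y"
    using assms(4) unfolding local_move_def by blast
  have A: "fst (w ! p) = m" "N - c + 1 \<le> snd (snd (w ! p))"
    and B: "fst (w ! Suc p) = m" "N - c + 1 \<le> snd (snd (w ! Suc p))"
    using assms(1-3) unfolding crowded_tail_def by auto
  have nth: "v ! i = (if i = p then X else if i = Suc p then Y else w ! i)" for i
    using assms(3) unfolding v set_pair_def by (simp add: nth_list_update)
  have len: "length v = length w"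
    using assms(3) unfolding v by simp
  have "fst X = m" "fst Y = m" "N - c + 1 \<le> snd (snd X)" "N - c + 1 \<le> snd (snd Y)"
    using move A B unfolding pair_move_def pair_perm_def by auto
  then have tail: "\<forall>i. n \<le> i \<and> i < length v \<longrightarrow> fst (v ! i) = m \<and> N - c + 1 \<le> snd (snd (v ! i))"
    using assms(1) unfolding crowded_tail_def nth len by auto
  have "card {i. n \<le> i \<and> i < length v \<and> fst (snd (v ! i)) = j} = card {i. n \<le> i \<and> i < length w \<and> fst (snd (w ! i)) = j}"
  proof (cases "fst (snd X) = fst (snd (w ! p)) \<and> fst (snd Y) = fst (snd (w ! Suc p))")
    case True
    then have "fst (snd (v ! i)) = fst (snd (w ! i))" for i
      unfolding nth by simp
    then show ?thesis
      unfolding len by simp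
  next
    case False
    then have "fst (snd X) = fst (snd (w ! Suc p))" "fst (snd Y) = fst (snd (w ! p))"
      using move unfolding pair_move_def pair_perm_def by auto
    then have "fst (snd (v ! i)) = fst (snd (w ! Transposition.transpose p (Suc p) i))" for i
      unfolding nth by (simp add: Transposition.transpose_def)
    then show ?thesis
      unfolding len using assms(2,3) by (intro card_positions_transpose)
  qed
  then show ?thesis
    using tail assms(1) unfolding crowded_tail_def by simp
qed

lemma crowded_tail_not_normal:
  assumes "valid_word N L r w" "crowded_tail N n m c j w" "normal_from N L n w"
  shows False
proof -
  let ?S = "{i. n \<le> i \<and> i < length w \<and> fst (snd (w ! i)) = j}"
  have "inj_on (\<lambda>i. snd (snd (w ! i))) ?S"
  proof (rule inj_onI)
    fix i i' assume i: "i \<in> ?S" and i': "i' \<in> ?S" and eq: "snd (snd (w ! i)) = snd (snd (w ! i'))"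
    then have "w ! i = w ! i'"
      using assms(2) unfolding crowded_tail_def by (simp add: prod_eq_iff)
    show "i = i'"
    proof (rule ccontr)
      assume "i \<noteq> i'"
      then have "kidx N L (w ! i) \<noteq> kidx N L (w ! i')"
        using normal_from_chain[OF assms(3), of i i'] normal_from_chain[OF assms(3), of i' i] i i' by force
      then show False
        using \<open>w ! i = w ! i'\<close> by simp
    qed
  qed
  moreover have "(\<lambda>i. snd (snd (w ! i))) ` ?S \<subseteq> {N - c + 1..N}"
  proof
    fix e assume "e \<in> (\<lambda>i. snd (snd (w ! i))) ` ?S"
    then obtain i where i: "i \<in> ?S" "e = snd (snd (w ! i))"
      by blast
    then have "valid_entry N L (w ! i)"
      using assms(1) by (intro valid_word_nth) (auto simp: valid_word_def)
    then show "e \<in> {N - c + 1..N}"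
      using i assms(2) unfolding crowded_tail_def valid_entry_def by auto
  qed
  ultimately have "card ?S \<le> card {N - c + 1..N}"
    by (rule card_inj_on_le) simp
  then show False
    using assms(2) unfolding crowded_tail_def by simp arith
qed

section \<open>The degree of normally ordered words\<close>

lemma kunder_eq_div:
  assumes "1 \<le> N" "1 \<le> L"
  shows "kunder N L k = (- k) div (int N * int L)"
proof -
  define t where "t = - ((k - 1) div int N)"
  have Npos: "int N > 0"
    using assms by simp
  have mod: "k - 1 = int N * ((k - 1) div int N) + (k - 1) mod int N"
    by simp
  have t1: "(kbar N k - k) div int N = t"
  proof -
    have "kbar N k - k = int N * t"
      using mod unfolding kbar_def t_def by (simp add: algebra_simps)
    then show ?thesis
      using Npos by simp
  qed
  have ku: "kunder N L k = (t - 1) div int L"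
  proof -
    have "t - 1 = int L * ((t - 1) div int L) + (t - 1) mod int L"
      by simp
    then have "t - kdot N L k = int L * ((t - 1) div int L)"
      unfolding kdot_def t1 by (simp add: algebra_simps)
    then show ?thesis
      unfolding kunder_def t1 using assms by simp
  qed
  have div_N: "(- k) div int N = t - 1"
  proof (rule int_div_pos_eq[where r = "int N - 1 - (k - 1) mod int N"])
    show "- k = int N * (t - 1) + (int N - 1 - (k - 1) mod int N)"
      using mod unfolding t_def by (simp add: algebra_simps)
    show "0 \<le> int N - 1 - (k - 1) mod int N" "int N - 1 - (k - 1) mod int N < int N"
      using pos_mod_bound[OF Npos, of "k - 1"] pos_mod_sign[OF Npos, of "k - 1"] by linarith+
  qed
  have "(- k) div (int N * int L) = (- k) div int N div int L"
    by (rule zdiv_zmult2_eq) simp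
  then show ?thesis
    unfolding ku div_N by simp
qed

lemma kunder_antimono: "1 \<le> N \<Longrightarrow> 1 \<le> L \<Longrightarrow> k \<le> k' \<Longrightarrow> kunder N L k' \<le> kunder N L k"
  by (simp add: kunder_eq_div zdiv_mono1)

lemma kunder_kidx:
  assumes "1 \<le> N" "1 \<le> L" "valid_entry N L x"
  shows "kunder N L (kidx N L x) = fst x"
proof -
  obtain a \<beta> \<epsilon> where x: "x = (a, \<beta>, \<epsilon>)"
    by (cases x) auto
  have r: "1 \<le> \<beta>" "\<beta> \<le> L" "1 \<le> \<epsilon>" "\<epsilon> \<le> N"
    using assms(3) x by (auto simp: valid_entry_def)
  have "int N * 1 \<le> int N * int \<beta>" "int N * int \<beta> \<le> int N * int L"
    using r by (auto intro: mult_left_mono)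
  then have "0 \<le> int N * int \<beta> - int \<epsilon>" "int N * int \<beta> - int \<epsilon> < int N * int L"
    using r by linarith+
  then have "(int N * int L * a + (int N * int \<beta> - int \<epsilon>)) div (int N * int L) = a"
    by (intro int_div_pos_eq[where r = "int N * int \<beta> - int \<epsilon>"]) (auto simp: algebra_simps)
  moreover have "- kidx N L x = int N * int L * a + (int N * int \<beta> - int \<epsilon>)"
    unfolding x kidx_def by (simp add: algebra_simps)
  ultimately show ?thesis
    using kunder_eq_div[OF assms(1,2)] x by simp
qed

lemma kidx_lower_bound:
  assumes "valid_entry N L x"
  shows "1 - int N * int L * (fst x + 1) \<le> kidx N L x"
proof -
  obtain a \<beta> \<epsilon> where x: "x = (a, \<beta>, \<epsilon>)"
    by (cases x) auto
  have "int N * int \<beta> \<le> int N * int L" "1 \<le> int \<epsilon>"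
    using assms x by (auto simp: valid_entry_def intro: mult_left_mono)
  then show ?thesis
    unfolding x kidx_def by (simp add: algebra_simps)
qed

lemma normal_exp_mono:
  assumes "1 \<le> N" "1 \<le> L" "valid_word N L r v" "normal_from N L 0 v" "i \<le> j" "j < r"
  shows "fst (v ! i) \<le> fst (v ! j)"
proof -
  have "kidx N L (v ! j) \<le> kidx N L (v ! i)"
    using normal_from_chain[OF assms(4), of i j] assms(3,5,6) by (simp add: valid_word_def)
  then have "kunder N L (kidx N L (v ! i)) \<le> kunder N L (kidx N L (v ! j))"
    by (rule kunder_antimono[OF assms(1,2)])
  then show ?thesis
    using assms valid_word_nth[OF assms(3)] by (simp add: kunder_kidx)
qed

lemma sum_telescope_int: "(\<Sum>i<Suc n. f (int i) - f (int i - 1)) = f (int n) - (f (-1) :: int)"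
  by (induction n) (auto simp: algebra_simps)

context
  fixes N L :: nat and M m :: int and s l n :: nat
  assumes N: "1 \<le> N" and L: "1 \<le> L" and s: "s < N * L" and n: "n = s + l * N * L"
    and Mm: "M - int s - int l * int N * int L = - m * int N * int L"
begin

definition block_index :: "int \<Rightarrow> int" where
  "block_index x = (x - int s) div (int N * int L)"

lemma kunder_oo: "kunder N L (oo M (Suc i)) = block_index (int i) + m - int l"
proof -
  have "- oo M (Suc i) = (int i - int s) + (int N * int L) * (m - int l)"
    using Mm unfolding oo_def by (simp add: algebra_simps)
  then show ?thesis
    unfolding kunder_eq_div[OF N L] block_index_def using N L by simp
qed

lemma kunder_oo_plus_1: "kunder N L (oo M (Suc i) + 1) = block_index (int i - 1) + m - int l"
proof -
  have e: "- (oo M (Suc i) + 1) = (int i - 1 - int s) + (int N * int L) * (m - int l)"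
    using Mm unfolding oo_def by (simp add: algebra_simps)
  have d: "((int i - 1 - int s) + (int N * int L) * (m - int l)) div (int N * int L)
      = (m - int l) + (int i - 1 - int s) div (int N * int L)"
    by (rule div_mult_self2) (use N L in simp)
  show ?thesis
    unfolding kunder_eq_div[OF N L] block_index_def e d by simp
qed

lemma block_index_mono: "x \<le> y \<Longrightarrow> block_index x \<le> block_index y"
  unfolding block_index_def using N L by (intro zdiv_mono1) auto

lemma block_index_n: "block_index (int n) = int l"
  unfolding block_index_def n using N L by simp

lemma block_index_minus_1: "block_index (- 1) = - 1"
proof -
  have "int s < int N * int L"
    using s by (metis of_nat_less_iff of_nat_mult)
  then show ?thesis
    unfolding block_index_def
    by (intro int_div_pos_eq[where r = "int N * int L - 1 - int s"]) (auto simp: algebra_simps)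
qed

context
  fixes v :: word and t :: nat
  assumes t: "1 \<le> t" and valid: "valid_word N L (n + t) v" and normal: "normal_from N L 0 v"
    and bounded: "exps_bounded m t v"
begin

lemma length_v: "length v = n + t"
  using valid by (simp add: valid_word_def)

lemma exp_le_top: "i < n + t \<Longrightarrow> fst (v ! i) \<le> m"
  using bounded length_v unfolding exps_bounded_def by (metis nth_mem)

lemma exp_below_top_at_n: "fst (v ! n) < m"
proof (rule ccontr)
  assume "\<not> fst (v ! n) < m"
  then have "fst (v ! i) = m" if "n \<le> i" "i < n + t" for i
    using normal_exp_mono[OF N L valid normal that] exp_le_top[of n] exp_le_top[OF that(2)] t by simp
  then have "{n..<n + t} \<subseteq> {i. i < length v \<and> fst (v ! i) = m}"
    using length_v by auto
  then have "card {n..<n + t} \<le> card {i. i < length v \<and> fst (v ! i) = m}"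
    by (intro card_mono) auto
  then have "t \<le> length (filter (\<lambda>x. fst x = m) v)"
    by (simp add: length_filter_conv_card)
  then show False
    using bounded unfolding exps_bounded_def by simp
qed

lemma exp_le_before_n:
  assumes "i \<le> n"
  shows "fst (v ! i) \<le> block_index (int i - 1) + m - int l"
proof -
  have "1 - int N * int L * m \<le> kidx N L (v ! n)"
    using kidx_lower_bound[OF valid_word_nth[OF valid, of n]] exp_below_top_at_n t
      mult_left_mono[of "fst (v ! n) + 1" m "int N * int L"] by simp
  moreover have "kidx N L (v ! n) + int (n - i) \<le> kidx N L (v ! i)"
    using normal_from_chain[OF normal _ assms] length_v t by simp
  moreover have "oo M (Suc i) + 1 = 1 - int N * int L * m + int (n - i)"
    using Mm n assms unfolding oo_def by (simp add: algebra_simps of_nat_diff)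
  ultimately have "kunder N L (kidx N L (v ! i)) \<le> kunder N L (oo M (Suc i) + 1)"
    by (intro kunder_antimono[OF N L]) linarith
  then show ?thesis
    using kunder_kidx[OF N L valid_word_nth[OF valid]] assms t kunder_oo_plus_1 by simp
qed

lemma deg_word_greater: "int l < deg_word N L M v"
proof -
  define d where "d i = kunder N L (oo M (Suc i)) - fst (v ! i)" for i
  have "block_index (int i) - block_index (int i - 1) \<le> d i" if "i \<le> n" for i
    using exp_le_before_n[OF that] kunder_oo[of i] unfolding d_def by simp
  then have "(\<Sum>i<Suc n. block_index (int i) - block_index (int i - 1)) \<le> (\<Sum>i<Suc n. d i)"
    by (intro sum_mono) simp
  moreover have "0 \<le> d i" if "i \<in> {Suc n..<n + t}" for i
  proof -
    have "int l \<le> block_index (int i)"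
      using block_index_mono[of "int n" "int i"] block_index_n that by simp
    then show ?thesis
      using exp_le_top[of i] kunder_oo[of i] that unfolding d_def by simp
  qed
  then have "0 \<le> (\<Sum>i\<in>{Suc n..<n + t}. d i)"
    by (rule sum_nonneg)
  moreover have "deg_word N L M v = (\<Sum>i<Suc n. d i) + (\<Sum>i\<in>{Suc n..<n + t}. d i)"
  proof -
    have "{..<n + t} = {..<Suc n} \<union> {Suc n..<n + t}"
      using t by auto
    then have "deg_word N L M v = (\<Sum>i\<in>{..<Suc n} \<union> {Suc n..<n + t}. d i)"
      unfolding deg_word_def d_def length_v by simp
    also have "\<dots> = (\<Sum>i<Suc n. d i) + (\<Sum>i\<in>{Suc n..<n + t}. d i)"
      by (rule sum.union_disjoint) auto
    finally show ?thesis .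
  qed
  ultimately show ?thesis
    unfolding sum_telescope_int block_index_n block_index_minus_1 by linarith
qed

lemma VMr_word_of_normal: "VMr_word N L M (n + t) v"
proof -
  have "kidx N L (v ! j) < kidx N L (v ! i)" if "i < j" "j < n + t" for i j
    using normal_from_chain[OF normal, of i j] that length_v by simp
  moreover have "fst (v ! (n + t - 1)) \<le> kunder N L (oo M (n + t))"
  proof -
    have "int l \<le> block_index (int (n + t - 1))"
      using block_index_mono[of "int n" "int (n + t - 1)"] block_index_n t by simp
    moreover have "Suc (n + t - 1) = n + t"
      using t by simp
    ultimately show ?thesis
      using kunder_oo[of "n + t - 1"] exp_le_top[of "n + t - 1"] t by simp
  qed
  ultimately show ?thesis
    unfolding VMr_word_def using valid by blast
qed

end

end

definition zl_part :: "word \<Rightarrow> (int \<times> nat) list" where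
  "zl_part w = map (\<lambda>(m, b, e). (m, b)) w"

definition n_part :: "word \<Rightarrow> nat list" where
  "n_part w = map (\<lambda>(m, b, e). e) w"

lemma tprod_apply: "tprod f y w = f (zl_part w) * y (n_part w)"
  by (simp add: tprod_def zl_part_def n_part_def)

lemma length_zl_part [simp]: "length (zl_part w) = length w"
  and length_n_part [simp]: "length (n_part w) = length w"
  by (simp_all add: zl_part_def n_part_def)

lemma nth_zl_part: "i < length w \<Longrightarrow> zl_part w ! i = (fst (w ! i), fst (snd (w ! i)))"
  and nth_n_part: "i < length w \<Longrightarrow> n_part w ! i = snd (snd (w ! i))"
  by (simp_all add: zl_part_def n_part_def split: prod.splits)

lemma finite_supp_tprod:
  assumes "finite (supp f)" "finite {es. y es \<noteq> 0}"
  shows "finite (supp (tprod f y))"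
proof -
  let ?join = "\<lambda>(u, es). map2 (\<lambda>(m, b) e. (m, b, e)) u es"
  have "w = ?join (zl_part w, n_part w)" for w
    by (induction w) (auto simp: zl_part_def n_part_def)
  then have "supp (tprod f y) \<subseteq> ?join ` (supp f \<times> {es. y es \<noteq> 0})"
    unfolding supp_def tprod_apply by (auto intro!: image_eqI)
  then show ?thesis
    using assms by (auto intro: finite_subset)
qed

context
  fixes N c n :: nat and yn :: "nat list \<Rightarrow> K" and eps :: "nat list"
  assumes yn: "yn \<in> Ntens N n" and eps: "\<forall>e\<in>set eps. N - c + 1 \<le> e \<and> e \<le> N"
begin

lemma ytens_nonzero:
  assumes "ytens n yn eps es \<noteq> 0"
  shows "length es = n + length eps" "set es \<subseteq> {1..N}" "\<And>i. n \<le> i \<Longrightarrow> i < length es \<Longrightarrow> N - c + 1 \<le> es ! i"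
proof -
  have es: "length es = n + length eps" "drop n es = eps" "yn (take n es) \<noteq> 0"
    using assms unfolding ytens_def by (auto split: if_splits)
  then show "length es = n + length eps"
    by simp
  have "set (take n es) \<subseteq> {1..N}"
    using yn es(3) unfolding Ntens_def by auto
  moreover have "set (drop n es) \<subseteq> {1..N}"
    using eps es(2) by auto
  ultimately show "set es \<subseteq> {1..N}"
    by (metis append_take_drop_id set_append Un_subset_iff)
  show "N - c + 1 \<le> es ! i" if "n \<le> i" "i < length es" for i
  proof -
    have "es ! i = eps ! (i - n)"
      using that unfolding es(2)[symmetric] by simp
    moreover have "eps ! (i - n) \<in> set eps"
      using that es(1) by (intro nth_mem) simp
    ultimately show ?thesis
      using eps by simp
  qed
qed

lemma finite_ytens_support: "finite {es. ytens n yn eps es \<noteq> 0}"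
proof (rule finite_subset)
  show "{es. ytens n yn eps es \<noteq> 0} \<subseteq> {es. set es \<subseteq> {1..N} \<and> length es = n + length eps}"
    using ytens_nonzero by blast
  show "finite {es. set es \<subseteq> {1..N} \<and> length es = n + length eps}"
    by (rule finite_lists_length_eq) simp
qed

lemma tprod_ytens_nonzero_nidx:
  assumes "tprod f (ytens n yn eps) w \<noteq> 0" "n \<le> i" "i < length w"
  shows "N - c + 1 \<le> snd (snd (w ! i))"
proof -
  have "ytens n yn eps (n_part w) \<noteq> 0"
    using assms(1) by (auto simp: tprod_apply)
  then show ?thesis
    using ytens_nonzero(3)[of "n_part w" i] assms(2,3) by (simp add: nth_n_part)
qed

lemma valid_tprod_ytens_nonzero:
  assumes "tprod f (ytens n yn eps) w \<noteq> 0"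
    and "\<And>u. f u \<noteq> 0 \<Longrightarrow> length u = n + length eps \<and> (\<forall>x\<in>set u. 1 \<le> snd x \<and> snd x \<le> L)"
  shows "valid_word N L (n + length eps) w"
proof -
  have "f (zl_part w) \<noteq> 0" "ytens n yn eps (n_part w) \<noteq> 0"
    using assms(1) by (auto simp: tprod_apply)
  then have f: "length w = n + length eps" "\<forall>x\<in>set (zl_part w). 1 \<le> snd x \<and> snd x \<le> L"
    and y: "set (n_part w) \<subseteq> {1..N}"
    using assms(2)[of "zl_part w"] ytens_nonzero(2) by simp_all
  have "valid_entry N L (w ! i)" if "i < length w" for i
    using nth_mem[of i "zl_part w"] nth_mem[of i "n_part w"] f(2) y that
    by (auto simp: valid_entry_def nth_zl_part nth_n_part)
  then show ?thesis
    using f(1) unfolding valid_word_iff by (metis in_set_conv_nth)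
qed

end

lemma exps_bounded_zl_part:
  "exps_bounded m t w \<longleftrightarrow> (\<forall>x\<in>set (zl_part w). fst x \<le> m) \<and> length (filter (\<lambda>x. fst x = m) (zl_part w)) < t"
proof -
  have fst_zl: "map fst (zl_part w) = map fst w"
    by (simp add: zl_part_def case_prod_beta)
  have via_fst: "(\<forall>x\<in>set xs. fst x \<le> m) \<longleftrightarrow> (\<forall>i\<in>set (map fst xs). i \<le> m)"
    "length (filter (\<lambda>x. fst x = m) xs) = length (filter (\<lambda>i. i = m) (map fst xs))"
    for xs :: "(int \<times> 'a) list"
    by (induction xs) auto
  show ?thesis
    unfolding exps_bounded_def via_fst fst_zl ..
qed

lemma calK_nonzero:
  assumes "f \<in> calK L n m b c" "f u \<noteq> 0"
  shows "length u = n + b * c \<and> (\<forall>x\<in>set u. 1 \<le> snd x \<and> snd x \<le> L)"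
    and "(\<forall>x\<in>set u. fst x \<le> m) \<and> length (filter (\<lambda>x. fst x = m) u) < b * c"
proof -
  obtain g where g: "g \<in> {(\<lambda>u. if map fst u = ms then E (map snd u) else 0) | ms E.
      length ms = n + b * c \<and> E \<in> Ltens L (n + b * c) \<and> (\<forall>x\<in>set ms. x \<le> m) \<and>
      card {i. i < n + b * c \<and> ms ! i = m} < b * c}" "g u \<noteq> 0"
    using assms unfolding calK_def by (rule fspan_nonzero)
  then obtain ms E where u: "map fst u = ms" "E (map snd u) \<noteq> 0" and E: "E \<in> Ltens L (n + b * c)"
    and ms: "\<forall>x\<in>set ms. x \<le> m" "card {i. i < n + b * c \<and> ms ! i = m} < b * c"
    by (auto split: if_splits)
  show len: "length u = n + b * c \<and> (\<forall>x\<in>set u. 1 \<le> snd x \<and> snd x \<le> L)"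
    using E u(2) unfolding Ltens_def by auto
  have "length (filter (\<lambda>x. fst x = m) u) = card {i. i < n + b * c \<and> ms ! i = m}"
    using len u(1) unfolding length_filter_conv_card by (metis nth_map)
  moreover have "\<forall>x\<in>set u. fst x \<le> m"
    using ms(1) unfolding u(1)[symmetric] by simp
  ultimately show "(\<forall>x\<in>set u. fst x \<le> m) \<and> length (filter (\<lambda>x. fst x = m) u) < b * c"
    using ms(2) by simp
qed

lemma card_one_based_positions:
  fixes n k :: nat
  shows "card {i. 1 \<le> i \<and> i \<le> k \<and> P (n + i - 1)} = card {i. n \<le> i \<and> i < n + k \<and> P i}"
proof -
  let ?A = "{i. n \<le> i \<and> i < n + k \<and> P i}" and ?B = "{i. 1 \<le> i \<and> i \<le> k \<and> P (n + i - 1)}"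
  have "?A = (\<lambda>i. n + i - 1) ` ?B"
  proof (rule set_eqI, rule iffI)
    fix j assume j: "j \<in> ?A"
    then have j_eq: "j = n + (j - n + 1) - 1"
      by simp
    then have "j - n + 1 \<in> ?B"
      using j by auto
    then show "j \<in> (\<lambda>i. n + i - 1) ` ?B"
      using j_eq by (rule rev_image_eqI)
  next
    fix j assume "j \<in> (\<lambda>i. n + i - 1) ` ?B"
    then show "j \<in> ?A"
      by auto
  qed
  moreover have "inj_on (\<lambda>i. n + i - 1) ?B"
    by (rule inj_onI) auto
  ultimately show ?thesis
    by (simp add: card_image)
qed

lemma calL_nonzero:
  assumes "f \<in> calL L n m b c" "f u \<noteq> 0"
  shows "length u = n + b * c \<and> (\<forall>x\<in>set u. 1 \<le> snd x \<and> snd x \<le> L)"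
    and "\<forall>i. n \<le> i \<and> i < n + b * c \<longrightarrow> fst (u ! i) = m"
    and "\<exists>j. c < card {i. n \<le> i \<and> i < n + b * c \<and> snd (u ! i) = j}"
proof -
  obtain g where g: "g \<in> {delta u | u. length u = n + b * c \<and> (\<forall>x\<in>set u. 1 \<le> snd x \<and> snd x \<le> L) \<and>
      (\<forall>i < n. fst (u ! i) < m) \<and> (\<forall>i. n \<le> i \<and> i < n + b * c \<longrightarrow> fst (u ! i) = m) \<and>
      (\<exists>j < b. c < card {i. 1 \<le> i \<and> i \<le> b * c \<and> snd (u ! (n + i - 1)) = j})}" "g u \<noteq> 0"
    using assms unfolding calL_def by (rule fspan_nonzero)
  then obtain u' where "delta u' u \<noteq> 0" and u': "length u' = n + b * c" "\<forall>x\<in>set u'. 1 \<le> snd x \<and> snd x \<le> L"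
    "\<forall>i. n \<le> i \<and> i < n + b * c \<longrightarrow> fst (u' ! i) = m"
    "\<exists>j < b. c < card {i. 1 \<le> i \<and> i \<le> b * c \<and> snd (u' ! (n + i - 1)) = j}"
    by blast
  then have "u' = u"
    by (simp add: delta_def split: if_splits)
  then show "length u = n + b * c \<and> (\<forall>x\<in>set u. 1 \<le> snd x \<and> snd x \<le> L)"
    and "\<forall>i. n \<le> i \<and> i < n + b * c \<longrightarrow> fst (u ! i) = m"
    using u' by simp_all
  obtain j where "c < card {i. 1 \<le> i \<and> i \<le> b * c \<and> snd (u ! (n + i - 1)) = j}"
    using u'(4) \<open>u' = u\<close> by blast
  then show "\<exists>j. c < card {i. n \<le> i \<and> i < n + b * c \<and> snd (u ! i) = j}"
    unfolding card_one_based_positions[of "b * c" "\<lambda>i. snd (u ! i) = j"] by blast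
qed

lemma finite_supp_calK:
  assumes "f \<in> calK L n m b c"
  shows "finite (supp f)"
proof (rule finite_supp_fspan[OF assms[unfolded calK_def]])
  fix g assume "g \<in> {(\<lambda>u. if map fst u = ms then E (map snd u) else 0) | ms E.
      length ms = n + b * c \<and> E \<in> Ltens L (n + b * c) \<and> (\<forall>x\<in>set ms. x \<le> m) \<and>
      card {i. i < n + b * c \<and> ms ! i = m} < b * c}"
  then obtain ms E where g: "g = (\<lambda>u. if map fst u = ms then E (map snd u) else 0)"
    and E: "E \<in> Ltens L (n + b * c)"
    by blast
  have "supp g \<subseteq> zip ms ` {bs. set bs \<subseteq> {1..L} \<and> length bs = n + b * c}"
  proof
    fix u assume "u \<in> supp g"
    then have "map fst u = ms" "E (map snd u) \<noteq> 0"
      unfolding g supp_def by (auto split: if_splits)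
    moreover have "u = zip (map fst u) (map snd u)"
      by (simp add: zip_map_fst_snd)
    ultimately show "u \<in> zip ms ` {bs. set bs \<subseteq> {1..L} \<and> length bs = n + b * c}"
      using E unfolding Ltens_def by force
  qed
  moreover have "finite {bs. set bs \<subseteq> {1..L} \<and> length bs = n + b * c}"
    by (rule finite_lists_length_eq) simp
  ultimately show "finite (supp g)"
    by (auto intro: finite_subset)
qed

lemma finite_supp_calL: "f \<in> calL L n m b c \<Longrightarrow> finite (supp f)"
  unfolding calL_def by (erule finite_supp_fspan) auto

context
  fixes N L :: nat and M m :: int and s l n b c :: nat and yn :: "nat list \<Rightarrow> K" and eps :: "nat list"
  assumes yn: "yn \<in> Ntens N n"
    and eps: "length eps = b * c" "\<forall>e\<in>set eps. N - c + 1 \<le> e \<and> e \<le> N"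
begin

theorem tprod_calK_high_degree:
  assumes N: "1 \<le> N" and L: "1 \<le> L" and s: "s < N * L" and n: "n = s + l * N * L"
    and Mm: "M - int s - int l * int N * int L = - m * int N * int L"
    and bc: "1 \<le> b * c" and f1: "f1 \<in> calK L n m b c"
  shows "tprod f1 (ytens n yn eps)
    \<in> wedge_span N L (n + b * c) {w. VMr_word N L M (n + b * c) w \<and> int l < deg_word N L M w}"
proof (rule wedge_span_of_finite_supp)
  show "finite (supp (tprod f1 (ytens n yn eps)))"
    using finite_supp_tprod[OF finite_supp_calK[OF f1] finite_ytens_support[OF yn eps(2)]] .
  fix w assume "w \<in> supp (tprod f1 (ytens n yn eps))"
  then have nz: "tprod f1 (ytens n yn eps) w \<noteq> 0"
    by (simp add: supp_def)
  have valid: "valid_word N L (n + b * c) w"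
    using valid_tprod_ytens_nonzero[OF yn eps(2) nz] calK_nonzero(1)[OF f1] eps(1) by metis
  have "exps_bounded m (b * c) w"
    using nz calK_nonzero(2)[OF f1, of "zl_part w"] by (simp add: exps_bounded_zl_part tprod_apply)
  then have "delta w \<in> wedge_span N L (n + b * c)
      {v. valid_word N L (n + b * c) v \<and> exps_bounded m (b * c) v \<and> normal_from N L 0 v}"
    using valid by (intro straighten) (auto intro: exps_bounded_local_move simp: valid_word_def)
  then show "delta w \<in> wedge_span N L (n + b * c) {w. VMr_word N L M (n + b * c) w \<and> int l < deg_word N L M w}"
    by (rule wedge_span_mono[rotated]) (auto intro: VMr_word_of_normal[OF N L s n Mm bc] deg_word_greater[OF N L s n Mm bc])
qed

theorem tprod_calL_in_rel_space:
  assumes f2: "f2 \<in> calL L n m b c"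
  shows "tprod f2 (ytens n yn eps) \<in> rel_space N L (n + b * c)"
  unfolding wedge_span_empty[symmetric]
proof (rule wedge_span_of_finite_supp)
  show "finite (supp (tprod f2 (ytens n yn eps)))"
    using finite_supp_tprod[OF finite_supp_calL[OF f2] finite_ytens_support[OF yn eps(2)]] .
  fix w assume "w \<in> supp (tprod f2 (ytens n yn eps))"
  then have nz: "tprod f2 (ytens n yn eps) w \<noteq> 0"
    by (simp add: supp_def)
  have valid: "valid_word N L (n + b * c) w"
    using valid_tprod_ytens_nonzero[OF yn eps(2) nz] calL_nonzero(1)[OF f2] eps(1) by metis
  have u: "f2 (zl_part w) \<noteq> 0"
    using nz by (simp add: tprod_apply)
  then have len: "length w = n + b * c"
    using calL_nonzero(1)[OF f2] by fastforce
  obtain j where "c < card {i. n \<le> i \<and> i < n + b * c \<and> snd (zl_part w ! i) = j}"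
    using calL_nonzero(3)[OF f2 u] by blast
  moreover have "{i. n \<le> i \<and> i < n + b * c \<and> snd (zl_part w ! i) = j}
      = {i. n \<le> i \<and> i < length w \<and> fst (snd (w ! i)) = j}"
    using len by (auto simp: nth_zl_part)
  moreover have "fst (w ! i) = m" if "n \<le> i" "i < length w" for i
    using calL_nonzero(2)[OF f2 u] that len by (auto simp: nth_zl_part)
  ultimately have "crowded_tail N n m c j w"
    using tprod_ytens_nonzero_nidx[OF yn eps(2) nz] unfolding crowded_tail_def by simp
  then have "delta w \<in> wedge_span N L (n + b * c)
      {v. valid_word N L (n + b * c) v \<and> crowded_tail N n m c j v \<and> normal_from N L n v}"
    using valid by (intro straighten) (auto intro: crowded_tail_local_move simp: valid_word_def)
  also have "{v. valid_word N L (n + b * c) v \<and> crowded_tail N n m c j v \<and> normal_from N L n v} = {}"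
    using crowded_tail_not_normal by blast
  finally show "delta w \<in> wedge_span N L (n + b * c) {}" .
qed

end

lemma wedge_in_high_deg_iff:
  "wedge_in_high_deg N L M r l x \<longleftrightarrow> x \<in> wedge_span N L r {w. VMr_word N L M r w \<and> int l < deg_word N L M w}"
  unfolding wedge_in_high_deg_def wedge_span_def by (simp add: setcompr_eq_image)

theorem mainTheorem16:
  fixes N L :: nat and M m :: int and s l d n b c :: nat
    and f1 f2 :: "(int \<times> nat) list \<Rightarrow> K" and yn :: "nat list \<Rightarrow> K" and eps :: "nat list"
  assumes "1 \<le> N" and "1 \<le> L"
    and "s < N * L" and "(M - int s) mod int (N * L) = 0"
    and "d \<le> l" and "n = s + l * N * L"
    and "M - int s - int l * int N * int L = - m * int N * int L"
    and "1 \<le> b" and "b \<le> L" and "1 \<le> c" and "c \<le> N"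
    and "yn \<in> Ntens N n"
    and "length eps = b * c" and "\<forall>e\<in>set eps. N - c + 1 \<le> e \<and> e \<le> N"
    and "f1 \<in> calK L n m b c" and "f2 \<in> calL L n m b c"
  shows "wedge_in_high_deg N L M (n + b * c) l (tprod f1 (ytens n yn eps)) \<and>
         tprod f2 (ytens n yn eps) \<in> rel_space N L (n + b * c)"
proof
  have "1 \<le> b * c"
    using \<open>1 \<le> b\<close> \<open>1 \<le> c\<close> by simp
  then show "wedge_in_high_deg N L M (n + b * c) l (tprod f1 (ytens n yn eps))"
    unfolding wedge_in_high_deg_iff using assms by (intro tprod_calK_high_degree) simp_all
  show "tprod f2 (ytens n yn eps) \<in> rel_space N L (n + b * c)"
    using assms by (intro tprod_calL_in_rel_space) simp_all
qed

end
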